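(* Let $k$ be a non-archimedean local field of residue characteristic $2$ and let $B(x)=\sum_{i=1}^n a_i x_i^2$ be an anisotropic diagonal quadratic form on $k^n$ with $0\le\operatorname{ord} a_i\le 1$ for all $i$. Let $a=q^{-\alpha}$, $z=q^{-\beta}$ and $u=q^{-2\beta-n}=z^2q^{-n}$. Then (for $\operatorname{Re}\alpha,\operatorname{Re}\beta$ large enough that all series converge) \[ \Pi^B(\alpha,\beta) = \sum_{0\le T<e} a^T X^B(\beta;\varpi^{2T}) + \frac{|2|^\alpha}{1-au}\, X^B(\beta;4) + \frac{|2|^\alpha (a-au)}{(1-a)(1-au)}\, X^B(\beta;0). \]
   Context: $k$ has ring of integers $\mathfrak o$, uniformizer $\varpi$, residue field of cardinality $q$, absolute value normalized by $|\varpi|=q^{-1}$, normalized valuation $\operatorname{ord}$, and $e=\operatorname{ord}(2)$ is the ramification index. On $\mathfrak o^n$ use the additive Haar measure of total mass $1$. For $\rho\in\mathfrak o$ and integer $\ell\ge0$ set $X_\ell^B(\rho)=\operatorname{meas}\{x\in\mathfrak o^n: B(x)-\rho\in 2\varpi^\ell\mathfrak o\}$ and, with $z=q^{-\beta}$, $X^B(\beta;\rho)=\sum_{\ell\ge0} z^\ell X^B_\ell(\rho)$. Define $\Pi^B(\alpha,\beta)=\int_{k^\times\cap\mathfrak o}|t|^\alpha X^B(\beta;t^2)\,dt$, where $dt$ is the multiplicative Haar measure on $k^\times$ normalized so that $\mathfrak o^\times$ has volume $1$. *)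

theory Defs
  imports "HOL-Analysis.Analysis"
begin

text \<open>A field k with a normalized discrete valuation v (= ord, the value at 0 is
irrelevant and never used), a uniformizer, residue field of cardinality q.\<close>

definition valring :: "('a::field \<Rightarrow> int) \<Rightarrow> 'a set" where
  "valring v = {x. x = 0 \<or> 0 \<le> v x}"

definition residue_rel :: "('a::field \<Rightarrow> int) \<Rightarrow> ('a \<times> 'a) set" where
  "residue_rel v = {(x, y). x \<in> valring v \<and> y \<in> valring v \<and> (x = y \<or> 1 \<le> v (x - y))}"

text \<open>Non-archimedean local field of residue characteristic 2 and characteristic 0
(so that e = ord 2 is finite): discretely valued, complete, finite residue field
of cardinality q, with 2 in the maximal ideal.\<close>

definition nonarch_local_field_res2 :: "('a::field \<Rightarrow> int) \<Rightarrow> 'a \<Rightarrow> nat \<Rightarrow> bool" where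
  "nonarch_local_field_res2 v \<pi> q \<longleftrightarrow>
     (\<forall>x y. x \<noteq> 0 \<longrightarrow> y \<noteq> 0 \<longrightarrow> v (x * y) = v x + v y) \<and>
     (\<forall>x y. x \<noteq> 0 \<longrightarrow> y \<noteq> 0 \<longrightarrow> x + y \<noteq> 0 \<longrightarrow> min (v x) (v y) \<le> v (x + y)) \<and>
     \<pi> \<noteq> 0 \<and> v \<pi> = 1 \<and>
     finite (valring v // residue_rel v) \<and> card (valring v // residue_rel v) = q \<and>
     (\<forall>s::nat \<Rightarrow> 'a. (\<forall>m::nat. \<exists>K. \<forall>i\<ge>K. \<forall>j\<ge>K. s i = s j \<or> int m \<le> v (s i - s j))
        \<longrightarrow> (\<exists>L. \<forall>m::nat. \<exists>K. \<forall>i\<ge>K. s i = L \<or> int m \<le> v (s i - L))) \<and>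
     (2::'a) \<noteq> 0 \<and> 1 \<le> v 2"

definition absv :: "('a::field \<Rightarrow> int) \<Rightarrow> nat \<Rightarrow> 'a \<Rightarrow> real" where
  "absv v q x = (if x = 0 then 0 else real q powr (- real_of_int (v x)))"

definition intvecs :: "('a::field \<Rightarrow> int) \<Rightarrow> ('a ^ 'n) set" where
  "intvecs v = {x. \<forall>i. x $ i \<in> valring v}"

text \<open>Cosets c + (pi^m o)^n inside o^n; they generate the Borel sigma-algebra of o^n.\<close>
definition add_cosets :: "('a::field \<Rightarrow> int) \<Rightarrow> 'a \<Rightarrow> ('a ^ 'n) set set" where
  "add_cosets v \<pi> = {{x \<in> intvecs v. \<forall>i. \<exists>w\<in>valring v. x $ i - c $ i = \<pi> ^ m * w} | c m.
       c \<in> intvecs v}"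

definition is_additive_haar_prob :: "('a::field \<Rightarrow> int) \<Rightarrow> 'a \<Rightarrow> ('a ^ 'n) measure \<Rightarrow> bool" where
  "is_additive_haar_prob v \<pi> M \<longleftrightarrow>
     space M = intvecs v \<and> sets M = sigma_sets (intvecs v) (add_cosets v \<pi>) \<and>
     (\<forall>A\<in>sets M. \<forall>c\<in>intvecs v. emeasure M ((\<lambda>x. x + c) ` A) = emeasure M A) \<and>
     emeasure M (space M) = 1"

definition unit_filtr :: "('a::field \<Rightarrow> int) \<Rightarrow> 'a \<Rightarrow> nat \<Rightarrow> 'a set" where
  "unit_filtr v \<pi> m = {x. x \<noteq> 0 \<and> v x = 0 \<and> (m = 0 \<or> (\<exists>w\<in>valring v. x - 1 = \<pi> ^ m * w))}"

definition mult_cosets :: "('a::field \<Rightarrow> int) \<Rightarrow> 'a \<Rightarrow> 'a set set" where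
  "mult_cosets v \<pi> = {(\<lambda>u. c * u) ` unit_filtr v \<pi> m | c m. c \<noteq> 0}"

definition is_mult_haar :: "('a::field \<Rightarrow> int) \<Rightarrow> 'a \<Rightarrow> 'a measure \<Rightarrow> bool" where
  "is_mult_haar v \<pi> N \<longleftrightarrow>
     space N = {x. x \<noteq> 0} \<and> sets N = sigma_sets {x. x \<noteq> 0} (mult_cosets v \<pi>) \<and>
     (\<forall>A\<in>sets N. \<forall>c. c \<noteq> 0 \<longrightarrow> emeasure N ((\<lambda>u. c * u) ` A) = emeasure N A) \<and>
     emeasure N (unit_filtr v \<pi> 0) = 1"

definition diagQ :: "'a::field ^ 'n \<Rightarrow> 'a ^ 'n \<Rightarrow> 'a" where
  "diagQ a x = (\<Sum>i\<in>UNIV. a $ i * (x $ i) ^ 2)"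

definition XBl :: "('a::field \<Rightarrow> int) \<Rightarrow> 'a \<Rightarrow> ('a ^ 'n) measure \<Rightarrow> 'a ^ 'n \<Rightarrow> nat \<Rightarrow> 'a \<Rightarrow> real" where
  "XBl v \<pi> M a l \<rho> = measure M {x \<in> intvecs v. \<exists>w\<in>valring v. diagQ a x - \<rho> = 2 * \<pi> ^ l * w}"

definition XB :: "('a::field \<Rightarrow> int) \<Rightarrow> 'a \<Rightarrow> nat \<Rightarrow> ('a ^ 'n) measure \<Rightarrow> 'a ^ 'n \<Rightarrow> complex \<Rightarrow> 'a \<Rightarrow> complex" where
  "XB v \<pi> q M a \<beta> \<rho> = (\<Sum>l. (of_nat q powr (- \<beta>)) ^ l * complex_of_real (XBl v \<pi> M a l \<rho>))"

definition PiB_integrand :: "('a::field \<Rightarrow> int) \<Rightarrow> 'a \<Rightarrow> nat \<Rightarrow> ('a ^ 'n) measure \<Rightarrow> 'a ^ 'n \<Rightarrow> complex \<Rightarrow> complex \<Rightarrow> 'a \<Rightarrow> complex" where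
  "PiB_integrand v \<pi> q M a \<alpha> \<beta> t = complex_of_real (absv v q t) powr \<alpha> * XB v \<pi> q M a \<beta> (t ^ 2)"

definition PiB :: "('a::field \<Rightarrow> int) \<Rightarrow> 'a \<Rightarrow> nat \<Rightarrow> ('a ^ 'n) measure \<Rightarrow> 'a measure \<Rightarrow> 'a ^ 'n \<Rightarrow> complex \<Rightarrow> complex \<Rightarrow> complex" where
  "PiB v \<pi> q M N a \<alpha> \<beta> = set_lebesgue_integral N (valring v - {0}) (PiB_integrand v \<pi> q M a \<alpha> \<beta>)"

end

theory Submission
  imports Defs
begin

text \<open>
  On the shell \<open>ord t = T\<close>, of multiplicative measure 1, the integrand is constant:
  \<open>X(\<rho>)\<close> only depends on \<open>\<rho>\<close> up to unit squares, so \<open>X(t^2)\<close> equals \<open>X(\<pi>^(2T))\<close> for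
  \<open>T < e\<close> and \<open>X(4 \<pi>^(2m))\<close> with \<open>m = T - e\<close> otherwise. The heart of the matter is the recursion
  \<open>X(4 \<pi>^(2m+2)) - X(0) = u (X(4 \<pi>^(2m)) - X(0))\<close>. For \<open>\<ell> \<le> e + 2m\<close> the conditions defining
  \<open>X\<^sub>\<ell>(4 \<pi>^(2m))\<close> and \<open>X\<^sub>\<ell>(0)\<close> coincide. For larger \<open>\<ell>\<close>, anisotropy forces every solution of
  \<open>B(x) \<equiv> \<rho> mod 2 \<pi>^\<ell>\<close> into \<open>(\<pi> o)^n\<close>: if \<open>x\<^sub>i\<close> were a unit while \<open>ord B(x) \<ge> 2e + 2\<close>, then
  \<open>1 - B(x) / (a\<^sub>i x\<^sub>i^2)\<close> would be a square by Hensel's lemma, and rescaling \<open>x\<^sub>i\<close> by its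
  square root would give a nontrivial zero of \<open>B\<close>. Scaling by \<open>\<pi>\<close> then shifts \<open>\<ell>\<close> by 2 and
  divides the measure by \<open>q^n\<close>, which with the factor \<open>z^2\<close> gives \<open>u\<close>. Summing the resulting
  geometric series over the shells yields the closed form.
\<close>

primrec hensel_seq :: "'a::field \<Rightarrow> nat \<Rightarrow> 'a" where
  "hensel_seq c 0 = 0" | "hensel_seq c (Suc k) = c - (hensel_seq c k)^2"

lemma diagQ_scale: "diagQ a (c *s x) = c^2 * diagQ a x"
  unfolding diagQ_def by (simp add: sum_distrib_left power_mult_distrib algebra_simps)

lemma diagQ_scale_coord:
  "diagQ a (\<chi> j. if j = i then x $ i * s else x $ j) = diagQ a x + a $ i * (x $ i)^2 * (s^2 - 1)"
proof -
  have "diagQ a (\<chi> j. if j = i then x $ i * s else x $ j)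
      = (\<Sum>j\<in>UNIV. a $ j * (x $ j)^2 + (if j = i then a $ i * (x $ i)^2 * (s^2 - 1) else 0))"
    unfolding diagQ_def by (intro sum.cong) (auto simp: algebra_simps power2_eq_square)
  then show ?thesis by (simp add: sum.distrib diagQ_def)
qed

lemma measure_vimage_eq_of_distr:
  assumes f: "f \<in> measurable M M" and g: "g \<in> measurable M M"
    and gf: "\<And>x. x \<in> space M \<Longrightarrow> f (g x) = x"
    and d: "distr M M f = M"
    and S: "S \<subseteq> space M"
  shows "measure M (f -` S \<inter> space M) = measure M S"
proof (cases "S \<in> sets M")
  case True
  then show ?thesis using measure_distr[OF f True] d by simp
next
  case False
  have "f -` S \<inter> space M \<notin> sets M"
  proof
    assume "f -` S \<inter> space M \<in> sets M"
    then have "g -` (f -` S \<inter> space M) \<inter> space M \<in> sets M" by (rule measurable_sets[OF g])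
    moreover have "g -` (f -` S \<inter> space M) \<inter> space M = S"
      using S gf measurable_space[OF g] by auto
    ultimately show False using False by simp
  qed
  then show ?thesis using False by (simp add: measure_notin_sets)
qed

lemma powr_of_nat_exp: "0 < q \<Longrightarrow> (of_nat q :: complex) powr w = exp (w * of_real (ln (real q)))"
  by (simp add: powr_def)

lemma powr_of_real_exp: "0 < r \<Longrightarrow> complex_of_real r powr w = exp (w * of_real (ln r))"
  by (simp add: powr_def Ln_of_real)

lemma norm_of_nat_powr_less_1: "1 < q \<Longrightarrow> Re w < 0 \<Longrightarrow> norm ((of_nat q :: complex) powr w) < 1"
proof -
  assume q: "1 < q" and w: "Re w < 0"
  have "norm ((of_nat q :: complex) powr w) = real q powr Re w"
    by (subst norm_powr_real_powr) auto
  also have "\<dots> < 1" using q w by (intro powr_less_one) auto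
  finally show ?thesis .
qed

lemma sums_geometric_combination:
  fixes A W E X0 X4 :: "'a::{real_normed_field, banach}"
  assumes "norm A < 1" and "norm (A * W) < 1"
  shows "(\<lambda>m. E * (X0 * A ^ m + (X4 - X0) * (A * W) ^ m))
    sums (E / (1 - A * W) * X4 + E * (A - A * W) / ((1 - A) * (1 - A * W)) * X0)"
proof -
  have "1 - A \<noteq> 0" "1 - A * W \<noteq> 0" using assms by auto
  then have "1 / (1 - A) - 1 / (1 - A * W) = (A - A * W) / ((1 - A) * (1 - A * W))"
    by (simp add: divide_simps)
  then have "E * (X0 * (1 / (1 - A)) + (X4 - X0) * (1 / (1 - A * W)))
      = E / (1 - A * W) * X4 + E * (A - A * W) / ((1 - A) * (1 - A * W)) * X0"
    by (simp add: algebra_simps add_divide_distrib[symmetric])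
  moreover have "(\<lambda>m. E * (X0 * A ^ m + (X4 - X0) * (A * W) ^ m))
      sums (E * (X0 * (1 / (1 - A)) + (X4 - X0) * (1 / (1 - A * W))))"
    using assms by (intro sums_mult sums_add geometric_sums)
  ultimately show ?thesis by simp
qed

lemma of_nat_powr_minus_2_mult_diff:
  "0 < q \<Longrightarrow> (of_nat q :: complex) powr (- 2 * \<beta> - of_nat n) = (of_nat q powr (- \<beta>))^2 / of_nat q ^ n"
proof -
  assume q: "0 < q"
  define L where "L = complex_of_real (ln (real q))"
  have eL: "exp L = of_nat q" using q by (simp add: L_def exp_of_real)
  have "(of_nat q :: complex) powr (- 2 * \<beta> - of_nat n) = exp ((- 2 * \<beta> - of_nat n) * L)"
    using q by (simp add: powr_of_nat_exp L_def)
  also have "\<dots> = exp (- \<beta> * L) ^ 2 / exp (of_nat n * L)"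
    by (simp add: exp_diff[symmetric] exp_of_nat_mult[symmetric] algebra_simps)
  also have "\<dots> = (of_nat q powr (- \<beta>))^2 / of_nat q ^ n"
    using q by (simp add: powr_of_nat_exp L_def exp_of_nat_mult eL[unfolded L_def])
  finally show ?thesis .
qed

locale local_field_res2 =
  fixes v :: "'a::field \<Rightarrow> int" and \<pi> :: 'a and q :: nat
  assumes local_field: "nonarch_local_field_res2 v \<pi> q"
begin

lemma val_mult: "x \<noteq> 0 \<Longrightarrow> y \<noteq> 0 \<Longrightarrow> v (x * y) = v x + v y"
  using local_field by (simp add: nonarch_local_field_res2_def)

lemma val_add_ge_min: "x \<noteq> 0 \<Longrightarrow> y \<noteq> 0 \<Longrightarrow> x + y \<noteq> 0 \<Longrightarrow> min (v x) (v y) \<le> v (x + y)"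
  using local_field unfolding nonarch_local_field_res2_def by blast

lemma uniformizer_nonzero: "\<pi> \<noteq> 0"
  and val_uniformizer: "v \<pi> = 1"
  and two_nonzero: "(2::'a) \<noteq> 0"
  and val_two_pos: "1 \<le> v 2"
  and finite_residue_classes: "finite (valring v // residue_rel v)"
  and card_residue_classes: "card (valring v // residue_rel v) = q"
  using local_field by (simp_all add: nonarch_local_field_res2_def)

lemma val_complete:
  fixes s :: "nat \<Rightarrow> 'a"
  assumes "\<forall>m::nat. \<exists>K. \<forall>i\<ge>K. \<forall>j\<ge>K. s i = s j \<or> int m \<le> v (s i - s j)"
  shows "\<exists>L. \<forall>m::nat. \<exists>K. \<forall>i\<ge>K. s i = L \<or> int m \<le> v (s i - L)"
  using local_field assms unfolding nonarch_local_field_res2_def by blast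

lemma val_one: "v 1 = 0" using val_mult[of 1 1] by simp

lemma val_minus_one: "v (-1) = 0" using val_mult[of "-1" "-1"] val_one by simp

lemma val_minus: "v (- x) = v x"
proof (cases "x = 0")
  case False then show ?thesis using val_mult[of "-1" x] val_minus_one by simp
qed simp

lemma val_inverse: "x \<noteq> 0 \<Longrightarrow> v (inverse x) = - v x"
  using val_mult[of x "inverse x"] val_one by simp

lemma val_divide: "x \<noteq> 0 \<Longrightarrow> y \<noteq> 0 \<Longrightarrow> v (x / y) = v x - v y"
  by (simp add: divide_inverse val_mult val_inverse)

lemma val_power: "x \<noteq> 0 \<Longrightarrow> v (x ^ k) = int k * v x"
  by (induction k) (auto simp: val_one val_mult algebra_simps)

lemma val_uniformizer_power: "v (\<pi> ^ k) = int k"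
  using val_power[OF uniformizer_nonzero] val_uniformizer by simp

lemma val_four: "v 4 = 2 * v 2"
proof -
  have "(4::'a) = 2 * 2" by simp
  then show ?thesis using val_mult[OF two_nonzero two_nonzero] by simp
qed

lemma four_nonzero: "(4::'a) \<noteq> 0"
proof -
  have "(4::'a) = 2 * 2" by simp
  then show ?thesis using two_nonzero by (metis mult_eq_0_iff)
qed

definition ram_index :: nat where "ram_index = nat (v 2)"

lemma int_ram_index: "int ram_index = v 2" using val_two_pos by (simp add: ram_index_def)

text \<open>\<open>v 0\<close> is unspecified, so \<open>0\<close> is declared to have every valuation.\<close>

definition val_ge :: "int \<Rightarrow> 'a \<Rightarrow> bool" where "val_ge m x \<longleftrightarrow> x = 0 \<or> m \<le> v x"

lemma val_ge_zero[simp]: "val_ge m 0" by (simp add: val_ge_def)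

lemma val_ge_mono: "val_ge m x \<Longrightarrow> k \<le> m \<Longrightarrow> val_ge k x" by (auto simp: val_ge_def)

lemma val_ge_minus: "val_ge m (-x) = val_ge m x" by (auto simp: val_ge_def val_minus)

lemma val_ge_add: "val_ge m x \<Longrightarrow> val_ge m y \<Longrightarrow> val_ge m (x + y)"
  unfolding val_ge_def using val_add_ge_min[of x y] by fastforce

lemma val_ge_diff: "val_ge m x \<Longrightarrow> val_ge m y \<Longrightarrow> val_ge m (x - y)"
  using val_ge_add[of m x "-y"] by (simp add: val_ge_minus)

lemma val_ge_mult: "val_ge m x \<Longrightarrow> val_ge k y \<Longrightarrow> val_ge (m + k) (x * y)"
  unfolding val_ge_def by (cases "x = 0"; cases "y = 0") (auto simp: val_mult)

lemma val_ge_mult_integral_right: "val_ge m x \<Longrightarrow> val_ge 0 y \<Longrightarrow> val_ge m (x * y)"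
  using val_ge_mult[of m x 0 y] by simp

lemma val_ge_mult_integral_left: "val_ge 0 x \<Longrightarrow> val_ge m y \<Longrightarrow> val_ge m (x * y)"
  using val_ge_mult[of 0 x m y] by simp

lemma val_ge_one: "val_ge 0 1" by (simp add: val_ge_def val_one)

lemma val_ge_uniformizer_power: "val_ge (int k) (\<pi> ^ k)"
  by (simp add: val_ge_def val_uniformizer_power)

lemma valring_iff_val_ge: "x \<in> valring v \<longleftrightarrow> val_ge 0 x" by (simp add: valring_def val_ge_def)

lemma multiple_iff_val_ge:
  assumes "c \<noteq> 0"
  shows "(\<exists>w\<in>valring v. y = c * w) \<longleftrightarrow> val_ge (v c) y"
proof
  assume "\<exists>w\<in>valring v. y = c * w"
  then obtain w where "val_ge 0 w" "y = c * w" by (auto simp: valring_iff_val_ge)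
  then show "val_ge (v c) y" using val_ge_mult[of "v c" c 0 w] by (simp add: val_ge_def)
next
  assume "val_ge (v c) y"
  then have "y / c \<in> valring v"
    using assms by (cases "y = 0") (auto simp: valring_iff_val_ge val_ge_def val_divide)
  moreover have "y = c * (y / c)" using assms by simp
  ultimately show "\<exists>w\<in>valring v. y = c * w" by blast
qed

lemma uniformizer_multiple_iff_val_ge: "(\<exists>w\<in>valring v. x = \<pi> ^ k * w) \<longleftrightarrow> val_ge (int k) x"
  using multiple_iff_val_ge[of "\<pi> ^ k"] uniformizer_nonzero by (simp add: val_uniformizer_power)

lemma two_uniformizer_multiple_iff_val_ge:
  "(\<exists>w\<in>valring v. y = 2 * \<pi>^l * w) \<longleftrightarrow> val_ge (v 2 + int l) y"
  using multiple_iff_val_ge[of "2 * \<pi>^l"] two_nonzero uniformizer_nonzero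
  by (simp add: val_mult val_uniformizer_power)

lemma val_ge_all_imp_zero: "(\<And>m::nat. val_ge (int m) x) \<Longrightarrow> x = 0"
proof (rule ccontr)
  assume "\<And>m::nat. val_ge (int m) x" "x \<noteq> 0"
  then have "int (nat (v x + 1)) \<le> v x" unfolding val_ge_def by blast
  then show False by (auto split: if_splits)
qed

lemma val_ge_unit_mult: "v u = 0 \<Longrightarrow> u \<noteq> 0 \<Longrightarrow> val_ge m (u * x) = val_ge m x"
  by (cases "x = 0") (auto simp: val_ge_def val_mult)

lemma val_ge_uniformizer_power_mult: "val_ge m (\<pi> ^ k * x) = val_ge (m - int k) x"
  by (cases "x = 0") (auto simp: val_ge_def val_mult val_uniformizer_power uniformizer_nonzero)

lemma val_ge_inverse_uniformizer_mult: "val_ge 1 x \<Longrightarrow> val_ge 0 (inverse \<pi> * x)"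
  using val_ge_uniformizer_power_mult[of 1 1 "inverse \<pi> * x"] uniformizer_nonzero
  by (simp add: mult.assoc[symmetric])

lemma unit_val_ge_0: "v u = 0 \<Longrightarrow> val_ge 0 u" by (simp add: val_ge_def)

lemma unit_inverse_val_ge_0: "v u = 0 \<Longrightarrow> u \<noteq> 0 \<Longrightarrow> val_ge 0 (inverse u)"
  by (simp add: val_ge_def val_inverse)

lemma intvecs_iff_val_ge: "x \<in> intvecs v \<longleftrightarrow> (\<forall>i. val_ge 0 (x $ i))"
  by (simp add: intvecs_def valring_iff_val_ge)

lemma hensel_seq_val_ge: "val_ge 1 c \<Longrightarrow> val_ge 1 (hensel_seq c k)"
proof (induction k)
  case (Suc k)
  then have "val_ge 2 ((hensel_seq c k)^2)"
    using val_ge_mult[of 1 "hensel_seq c k" 1 "hensel_seq c k"] by (simp add: power2_eq_square)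
  then have "val_ge 1 ((hensel_seq c k)^2)" using val_ge_mono by fastforce
  then show ?case using Suc by (simp add: val_ge_diff)
qed simp

lemma hensel_seq_step:
  assumes c: "val_ge 1 c"
  shows "val_ge (int k) (hensel_seq c (Suc k) - hensel_seq c k)"
proof (induction k)
  case 0 then show ?case using c val_ge_mono by fastforce
next
  case (Suc k)
  let ?y = "hensel_seq c"
  have "?y (Suc (Suc k)) - ?y (Suc k) = - ((?y (Suc k) - ?y k) * (?y (Suc k) + ?y k))"
    by (simp add: power2_eq_square algebra_simps)
  moreover have "val_ge 1 (?y (Suc k) + ?y k)" using hensel_seq_val_ge[OF c] val_ge_add by blast
  then have "val_ge (int k + 1) ((?y (Suc k) - ?y k) * (?y (Suc k) + ?y k))"
    using val_ge_mult Suc by blast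
  ultimately show ?case by (simp add: val_ge_minus add.commute)
qed

lemma hensel_seq_cauchy:
  assumes c: "val_ge 1 c"
  shows "i \<le> j \<Longrightarrow> val_ge (int i) (hensel_seq c j - hensel_seq c i)"
proof (induction j)
  case (Suc j)
  let ?y = "hensel_seq c"
  show ?case
  proof (cases "i = Suc j")
    case False
    then have "i \<le> j" using Suc by simp
    have "val_ge (int i) (?y (Suc j) - ?y j)"
      using hensel_seq_step[OF c, of j] \<open>i \<le> j\<close> val_ge_mono by simp
    moreover have "val_ge (int i) (?y j - ?y i)" using Suc \<open>i \<le> j\<close> by simp
    ultimately have "val_ge (int i) ((?y (Suc j) - ?y j) + (?y j - ?y i))" by (rule val_ge_add)
    then show ?thesis by (simp del: hensel_seq.simps)
  qed simp
qed simp

lemma val_ge_cauchy_converges: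
  fixes s :: "nat \<Rightarrow> 'a"
  assumes cauchy: "\<And>i j. i \<le> j \<Longrightarrow> val_ge (int i) (s j - s i)"
  shows "\<exists>L. \<forall>m::nat. \<exists>K. \<forall>i\<ge>K. val_ge (int m) (L - s i)"
proof -
  have "s i = s j \<or> int m \<le> v (s i - s j)" if "m \<le> i" "m \<le> j" for m i j
  proof -
    have "val_ge (int m) (s i - s j)"
    proof (cases "i \<le> j")
      case True
      then have "val_ge (int m) (s j - s i)"
        using cauchy[OF True] \<open>m \<le> i\<close> val_ge_mono[of "int i" _ "int m"] by simp
      then show ?thesis using val_ge_minus[of "int m" "s j - s i"] by simp
    next
      case False
      then show ?thesis using cauchy[of j i] \<open>m \<le> j\<close> val_ge_mono[of "int j" _ "int m"] by simp
    qed
    then show ?thesis by (simp add: val_ge_def)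
  qed
  then have "\<forall>m::nat. \<exists>K. \<forall>i\<ge>K. \<forall>j\<ge>K. s i = s j \<or> int m \<le> v (s i - s j)"
    by blast
  then obtain L where "\<forall>m::nat. \<exists>K. \<forall>i\<ge>K. s i = L \<or> int m \<le> v (s i - L)"
    using val_complete by blast
  then have "\<forall>m::nat. \<exists>K. \<forall>i\<ge>K. val_ge (int m) (- (L - s i))"
    unfolding val_ge_def by simp
  then show ?thesis unfolding val_ge_minus by blast
qed

lemma hensel_root:
  assumes c: "val_ge 1 c"
  shows "\<exists>L. val_ge 0 L \<and> L^2 + L = c"
proof -
  let ?y = "hensel_seq c"
  obtain L where L: "\<forall>m::nat. \<exists>K. \<forall>i\<ge>K. val_ge (int m) (L - ?y i)"
    using val_ge_cauchy_converges[OF hensel_seq_cauchy[OF c]] by blast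
  have y: "val_ge 0 (?y k)" for k
    using hensel_seq_val_ge[OF c, of k] val_ge_mono[of 1 _ 0] by simp
  obtain K0 where "\<forall>i\<ge>K0. val_ge 0 (L - ?y i)" using L[rule_format, of 0] by auto
  then have "val_ge 0 ((L - ?y K0) + ?y K0)" using y val_ge_add by blast
  then have L0: "val_ge 0 L" by simp
  have "L^2 + L - c = 0"
  proof (rule val_ge_all_imp_zero)
    fix m :: nat
    obtain K where K: "\<forall>i\<ge>K. val_ge (int m) (L - ?y i)" using L by blast
    have "L^2 + L - c = (L - ?y K) * (L + ?y K) + (L - ?y (Suc K))"
      by (simp add: power2_eq_square algebra_simps)
    moreover have "val_ge (int m) ((L - ?y K) * (L + ?y K))"
      using K L0 y val_ge_add val_ge_mult_integral_right by blast
    moreover have "val_ge (int m) (L - ?y (Suc K))"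
      using K[rule_format, of "Suc K"] by (simp del: hensel_seq.simps)
    ultimately show "val_ge (int m) (L^2 + L - c)" using val_ge_add by metis
  qed
  then show ?thesis using L0 by auto
qed

lemma one_plus_four_is_square: assumes c: "val_ge 1 c" shows "\<exists>s. s^2 = 1 + 4 * c"
proof -
  obtain L where "L^2 + L = c" using hensel_root[OF c] by blast
  then have "(1 + 2 * L)^2 = 1 + 4 * c" by (auto simp: power2_eq_square algebra_simps)
  then show ?thesis by blast
qed

lemma residue_rel_eq: "residue_rel v = {(x, y). val_ge 0 x \<and> val_ge 0 y \<and> val_ge 1 (x - y)}"
  unfolding residue_rel_def valring_iff_val_ge by (auto simp: val_ge_def)

lemma equiv_residue_rel: "equiv (valring v) (residue_rel v)"
proof (rule equivI)
  show "residue_rel v \<subseteq> valring v \<times> valring v" by (auto simp: residue_rel_eq valring_iff_val_ge)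
  show "refl_on (valring v) (residue_rel v)"
    unfolding refl_on_def residue_rel_eq by (auto simp: valring_iff_val_ge)
  show "sym (residue_rel v)"
    unfolding sym_def residue_rel_eq
  proof clarsimp
    fix x y assume "val_ge 1 (x - y)"
    then show "val_ge 1 (y - x)" using val_ge_minus[of 1 "x - y"] by simp
  qed
  show "trans (residue_rel v)"
    unfolding trans_def residue_rel_eq
  proof (clarsimp)
    fix x y z assume "val_ge 0 x" "val_ge 0 y" "val_ge 1 (x - y)" "val_ge 0 z" "val_ge 1 (y - z)"
    then show "val_ge 1 (x - z)" using val_ge_add[of 1 "x - y" "y - z"] by simp
  qed
qed

definition residue_reps :: "'a set" where "residue_reps = (\<lambda>C. SOME x. x \<in> C) ` (valring v // residue_rel v)"

lemma some_in_residue_class: "C \<in> valring v // residue_rel v \<Longrightarrow> (SOME x. x \<in> C) \<in> C"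
  using in_quotient_imp_non_empty[OF equiv_residue_rel] by (simp add: some_in_eq)

lemma residue_reps_card: "finite residue_reps" "card residue_reps = q"
proof -
  have inj: "inj_on (\<lambda>C. SOME x. x \<in> C) (valring v // residue_rel v)"
  proof (rule inj_onI)
    fix C D assume C: "C \<in> valring v // residue_rel v" and D: "D \<in> valring v // residue_rel v"
      and "(SOME x. x \<in> C) = (SOME x. x \<in> D)"
    then have "C \<inter> D \<noteq> {}" using some_in_residue_class[OF C] some_in_residue_class[OF D] by auto
    then show "C = D" using quotient_disj[OF equiv_residue_rel C D] by blast
  qed
  show "finite residue_reps" unfolding residue_reps_def using finite_residue_classes by simp
  show "card residue_reps = q"
    unfolding residue_reps_def using card_image[OF inj] card_residue_classes by simp
qed

lemma residue_reps_integral: "r \<in> residue_reps \<Longrightarrow> val_ge 0 r"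
proof -
  assume "r \<in> residue_reps"
  then obtain C where C: "C \<in> valring v // residue_rel v" "r = (SOME x. x \<in> C)"
    unfolding residue_reps_def by blast
  then have "r \<in> C" using some_in_residue_class by simp
  then show "val_ge 0 r"
    using in_quotient_imp_subset[OF equiv_residue_rel C(1)] valring_iff_val_ge by blast
qed

lemma residue_reps_cover: "val_ge 0 x \<Longrightarrow> \<exists>r\<in>residue_reps. val_ge 1 (x - r)"
proof -
  assume x: "val_ge 0 x"
  let ?C = "residue_rel v `` {x}"
  have C: "?C \<in> valring v // residue_rel v"
    using x by (intro quotientI) (simp add: valring_iff_val_ge)
  define r where "r = (SOME y. y \<in> ?C)"
  have "r \<in> ?C" unfolding r_def using C by (rule some_in_residue_class)
  then have "(x, r) \<in> residue_rel v" by simp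
  then have "val_ge 1 (x - r)" unfolding residue_rel_eq by simp
  moreover have "r \<in> residue_reps" unfolding residue_reps_def r_def using C by blast
  ultimately show ?thesis by blast
qed

lemma residue_reps_distinct:
  assumes "r \<in> residue_reps" "r' \<in> residue_reps" "val_ge 1 (r - r')"
  shows "r = r'"
proof -
  obtain C where C: "C \<in> valring v // residue_rel v" "r = (SOME x. x \<in> C)"
    using assms(1) unfolding residue_reps_def by blast
  obtain D where D: "D \<in> valring v // residue_rel v" "r' = (SOME x. x \<in> D)"
    using assms(2) unfolding residue_reps_def by blast
  have "r \<in> C" "r' \<in> D" using C D some_in_residue_class by auto
  moreover have "(r, r') \<in> residue_rel v"
    using assms residue_reps_integral by (simp add: residue_rel_eq)
  ultimately have "C = D" using quotient_eq_iff[OF equiv_residue_rel C(1) D(1)] by blast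
  then show ?thesis using C D by simp
qed

lemma card_residue_field_ge_2: "2 \<le> q"
proof -
  have "val_ge 0 (0::'a)" "val_ge 0 (1::'a)" using val_ge_one by auto
  obtain r0 where r0: "r0 \<in> residue_reps" "val_ge 1 (0 - r0)" using residue_reps_cover[of 0] by auto
  obtain r1 where r1: "r1 \<in> residue_reps" "val_ge 1 (1 - r1)"
    using residue_reps_cover[of 1] val_ge_one by auto
  note r = r0 r1
  have "r0 \<noteq> r1"
  proof
    assume "r0 = r1"
    have "val_ge 1 ((1 - r1) - (0 - r0))" using r val_ge_diff by blast
    then have "val_ge 1 (1::'a)" using \<open>r0 = r1\<close> by simp
    then show False by (simp add: val_ge_def val_one)
  qed
  then have "card {r0, r1} = 2" by simp
  moreover have "card {r0, r1} \<le> card residue_reps"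
    using r residue_reps_card by (intro card_mono) auto
  ultimately show ?thesis using residue_reps_card by simp
qed

abbreviation qpowr :: "complex \<Rightarrow> complex" where "qpowr s \<equiv> of_nat q powr (- s)"

lemma norm_qpowr_less_1: "0 < Re s \<Longrightarrow> norm (qpowr s) < 1"
  using card_residue_field_ge_2 by (intro norm_of_nat_powr_less_1) auto

lemma norm_qpowr_mult_less_1:
  assumes "0 < Re \<alpha>" and "0 < Re \<beta>"
  shows "norm (qpowr \<alpha> * (qpowr \<beta> ^ 2 / of_nat q ^ n)) < 1"
proof -
  define w where "w = qpowr \<beta> ^ 2 / of_nat q ^ n"
  have "norm w \<le> norm (qpowr \<beta>) ^ 2"
    using card_residue_field_ge_2 by (simp add: w_def norm_divide norm_power divide_le_eq)
  also have "\<dots> \<le> 1"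
    using norm_qpowr_less_1[OF assms(2)] by (simp add: power_le_one)
  finally have "norm (qpowr \<alpha> * w) \<le> norm (qpowr \<alpha>)"
    by (simp add: norm_mult mult_left_le)
  then show ?thesis
    using norm_qpowr_less_1[OF assms(1)] by (simp add: w_def)
qed

definition residue_rep_vecs :: "('a ^ 'n) set" where "residue_rep_vecs = {r. \<forall>i. r $ i \<in> residue_reps}"

lemma residue_rep_vecs_card:
  "finite (residue_rep_vecs :: ('a ^ 'n) set)" "card (residue_rep_vecs :: ('a ^ 'n) set) = q ^ CARD('n)"
proof -
  have bij: "bij_betw vec_nth (residue_rep_vecs :: ('a ^ 'n) set) (PiE UNIV (\<lambda>_. residue_reps))"
  proof (rule bij_betwI[where g = vec_lambda])
    show "vec_nth \<in> (residue_rep_vecs :: ('a ^ 'n) set) \<rightarrow> PiE UNIV (\<lambda>_. residue_reps)"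
      by (auto simp: residue_rep_vecs_def)
    show "vec_lambda \<in> PiE UNIV (\<lambda>_. residue_reps) \<rightarrow> (residue_rep_vecs :: ('a ^ 'n) set)"
      by (auto simp: residue_rep_vecs_def)
  qed auto
  have "card (PiE (UNIV :: 'n set) (\<lambda>_. residue_reps)) = q ^ CARD('n)"
    using residue_reps_card by (simp add: card_PiE)
  moreover have "finite (PiE (UNIV :: 'n set) (\<lambda>_. residue_reps))"
    using residue_reps_card by (simp add: finite_PiE)
  ultimately show "finite (residue_rep_vecs :: ('a ^ 'n) set)"
    and "card (residue_rep_vecs :: ('a ^ 'n) set) = q ^ CARD('n)"
    using bij_betw_finite[OF bij] bij_betw_same_card[OF bij] by auto
qed

lemma residue_rep_vecs_intvecs: "r \<in> residue_rep_vecs \<Longrightarrow> r \<in> intvecs v"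
  by (auto simp: residue_rep_vecs_def intvecs_iff_val_ge residue_reps_integral)

definition coset :: "'a ^ 'n \<Rightarrow> nat \<Rightarrow> ('a ^ 'n) set" where
  "coset c m = {x \<in> intvecs v. \<forall>i. val_ge (int m) (x $ i - c $ i)}"

lemma add_cosets_eq: "add_cosets v \<pi> = {coset c m | c m. c \<in> intvecs v}"
  unfolding add_cosets_def coset_def uniformizer_multiple_iff_val_ge ..

lemma coset_subset: "coset c m \<subseteq> intvecs v" by (auto simp: coset_def)

lemma coset_0: "c \<in> intvecs v \<Longrightarrow> coset c 0 = intvecs v"
  by (auto simp: coset_def intvecs_iff_val_ge intro: val_ge_diff)

lemma coset_center: "c \<in> intvecs v \<Longrightarrow> c \<in> coset c m" by (simp add: coset_def)

lemma coset_eq: assumes "x \<in> coset c m" shows "coset x m = coset c m"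
proof -
  have d: "\<And>i. val_ge (int m) (x $ i - c $ i)" using assms by (simp add: coset_def)
  have "\<And>y i. val_ge (int m) (y $ i - x $ i) \<longleftrightarrow> val_ge (int m) (y $ i - c $ i)"
  proof -
    fix y i
    have e1: "y $ i - c $ i = (y $ i - x $ i) + (x $ i - c $ i)" by simp
    have e2: "y $ i - x $ i = (y $ i - c $ i) - (x $ i - c $ i)" by simp
    show "val_ge (int m) (y $ i - x $ i) \<longleftrightarrow> val_ge (int m) (y $ i - c $ i)"
      using val_ge_add[OF _ d[of i], of "y $ i - x $ i"] val_ge_diff[OF _ d[of i], of "y $ i - c $ i"]
      by (metis e1 e2)
  qed
  then show ?thesis by (simp add: coset_def)
qed

lemma coset_antimono: "k \<le> m \<Longrightarrow> coset c m \<subseteq> coset c k"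
  by (auto simp: coset_def intro: val_ge_mono)

lemma coset_translate:
  assumes "c \<in> intvecs v" "d \<in> intvecs v"
  shows "(\<lambda>x. x + (d - c)) ` coset c m = coset d m"
proof
  show "(\<lambda>x. x + (d - c)) ` coset c m \<subseteq> coset d m"
  proof
    fix y assume "y \<in> (\<lambda>x. x + (d - c)) ` coset c m"
    then obtain x where x: "x \<in> coset c m" "y = x + (d - c)" by blast
    have "\<And>i. val_ge 0 (y $ i)" using x assms val_ge_add val_ge_diff
      unfolding coset_def intvecs_iff_val_ge by simp
    moreover have "\<And>i. y $ i - d $ i = x $ i - c $ i" using x by simp
    ultimately show "y \<in> coset d m" using x(1) by (simp add: coset_def intvecs_iff_val_ge)
  qed
next
  show "coset d m \<subseteq> (\<lambda>x. x + (d - c)) ` coset c m"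
  proof
    fix y assume y: "y \<in> coset d m"
    let ?x = "y - (d - c)"
    have "\<And>i. val_ge 0 (?x $ i)" using y assms val_ge_add val_ge_diff
      unfolding coset_def intvecs_iff_val_ge by simp
    moreover have "\<And>i. ?x $ i - c $ i = y $ i - d $ i" by simp
    ultimately have "?x \<in> coset c m" using y by (simp add: coset_def intvecs_iff_val_ge)
    then show "y \<in> (\<lambda>x. x + (d - c)) ` coset c m" by (intro image_eqI[of _ _ ?x]) simp_all
  qed
qed

lemma coset_inter:
  "coset c m \<inter> coset d k = {} \<or> coset c m \<inter> coset d k = coset c m \<or> coset c m \<inter> coset d k = coset d k"
proof (cases "coset c m \<inter> coset d k = {}")
  case False
  then obtain x where x: "x \<in> coset c m" "x \<in> coset d k" by blast
  have "coset c m = coset x m" "coset d k = coset x k" using coset_eq x by auto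
  then show ?thesis using coset_antimono[of m k x] coset_antimono[of k m x] by (cases "m \<le> k") auto
qed simp

lemma scale_intvecs: "val_ge 0 u \<Longrightarrow> x \<in> intvecs v \<Longrightarrow> u *s x \<in> intvecs v"
  by (simp add: intvecs_iff_val_ge val_ge_mult_integral_left)

lemma coset_Suc_shift_subset:
  assumes "r \<in> residue_rep_vecs"
  shows "coset (c + \<pi>^m *s r) (Suc m) \<subseteq> coset c m"
proof
  fix y assume y: "y \<in> coset (c + \<pi>^m *s r) (Suc m)"
  have "val_ge (int m) (y $ i - c $ i)" for i
  proof -
    have "val_ge (int (Suc m)) (y $ i - (c + \<pi>^m *s r) $ i)" using y by (simp add: coset_def)
    then have a: "val_ge (int m) (y $ i - (c + \<pi>^m *s r) $ i)" by (rule val_ge_mono) simp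
    have b: "val_ge (int m) (\<pi>^m * r $ i)"
      using val_ge_uniformizer_power_mult[of "int m" m "r $ i"] assms residue_reps_integral
      by (simp add: residue_rep_vecs_def)
    have "y $ i - c $ i = (y $ i - (c + \<pi>^m *s r) $ i) + \<pi>^m * r $ i" by simp
    then show ?thesis using val_ge_add[OF a b] by simp
  qed
  then show "y \<in> coset c m" using y by (simp add: coset_def)
qed

lemma coset_split:
  assumes c: "(c::'a^'n) \<in> intvecs v"
  shows "coset c m = (\<Union>r\<in>residue_rep_vecs. coset (c + \<pi>^m *s r) (Suc m))"
proof
  show "coset c m \<subseteq> (\<Union>r\<in>residue_rep_vecs. coset (c + \<pi>^m *s r) (Suc m))"
  proof
    fix y assume y: "y \<in> coset c m"
    define w where "w i = (y $ i - c $ i) / \<pi>^m" for i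
    have yw: "y $ i - c $ i = \<pi>^m * w i" for i using uniformizer_nonzero by (simp add: w_def)
    have "val_ge 0 (w i)" for i
    proof -
      have "val_ge (int m) (y $ i - c $ i)" using y by (simp add: coset_def)
      then show ?thesis unfolding yw val_ge_uniformizer_power_mult by simp
    qed
    then have ex: "\<forall>i. \<exists>r. r \<in> residue_reps \<and> val_ge 1 (w i - r)" using residue_reps_cover by blast
    from choice[OF ex] obtain rf where rf: "\<And>i. rf i \<in> residue_reps \<and> val_ge 1 (w i - rf i)"
      by blast
    let ?r = "vec_lambda rf :: 'a ^ 'n"
    have "?r \<in> residue_rep_vecs" using rf by (simp add: residue_rep_vecs_def)
    moreover have "y \<in> coset (c + \<pi>^m *s ?r) (Suc m)"
    proof -
      have "y $ i - (c + \<pi>^m *s ?r) $ i = \<pi>^m * (w i - rf i)" for i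
        using yw[of i] by (simp add: algebra_simps)
      then have "val_ge (int (Suc m)) (y $ i - (c + \<pi>^m *s ?r) $ i)" for i
        using rf[of i] val_ge_uniformizer_power_mult[of "int (Suc m)" m "w i - rf i"] by simp
      then show ?thesis using y by (simp add: coset_def)
    qed
    ultimately show "y \<in> (\<Union>r\<in>residue_rep_vecs. coset (c + \<pi>^m *s r) (Suc m))" by blast
  qed
next
  show "(\<Union>r\<in>residue_rep_vecs. coset (c + \<pi>^m *s r) (Suc m)) \<subseteq> coset c m"
    using coset_Suc_shift_subset by blast
qed

lemma coset_split_disjoint:
  "disjoint_family_on (\<lambda>r. coset ((c::'a^'n) + \<pi>^m *s r) (Suc m)) residue_rep_vecs"
unfolding disjoint_family_on_def
proof (intro ballI impI)
  fix r r' :: "'a^'n" assume r: "r \<in> residue_rep_vecs" "r' \<in> residue_rep_vecs" "r \<noteq> r'"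
  show "coset (c + \<pi>^m *s r) (Suc m) \<inter> coset (c + \<pi>^m *s r') (Suc m) = {}"
  proof (rule ccontr)
    assume "coset (c + \<pi>^m *s r) (Suc m) \<inter> coset (c + \<pi>^m *s r') (Suc m) \<noteq> {}"
    then obtain y where y: "y \<in> coset (c + \<pi>^m *s r) (Suc m)" "y \<in> coset (c + \<pi>^m *s r') (Suc m)"
      by blast
    have "r $ i = r' $ i" for i
    proof -
      have "val_ge (int (Suc m)) (y $ i - (c + \<pi>^m *s r') $ i)"
        and "val_ge (int (Suc m)) (y $ i - (c + \<pi>^m *s r) $ i)"
        using y unfolding coset_def by blast+
      then have "val_ge (int (Suc m)) ((y $ i - (c + \<pi>^m *s r') $ i) - (y $ i - (c + \<pi>^m *s r) $ i))"
        by (rule val_ge_diff)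
      moreover have "(y $ i - (c + \<pi>^m *s r') $ i) - (y $ i - (c + \<pi>^m *s r) $ i) = \<pi>^m * (r $ i - r' $ i)"
        by (simp add: algebra_simps)
      ultimately have "val_ge 1 (r $ i - r' $ i)"
        using val_ge_uniformizer_power_mult[of "int (Suc m)" m] by simp
      then show ?thesis using residue_reps_distinct r by (simp add: residue_rep_vecs_def)
    qed
    then show False using r(3) by (simp add: vec_eq_iff)
  qed
qed

lemma unit_scale_vimage_coset:
  assumes u: "v u = 0" "u \<noteq> 0"
  shows "(\<lambda>x. u *s x) -` coset c m \<inter> intvecs v = coset (inverse u *s c) m"
proof -
  have "val_ge (int m) (u * x - c) \<longleftrightarrow> val_ge (int m) (x - inverse u * c)" for x c
  proof -
    have "u * x - c = u * (x - inverse u * c)" using u by (simp add: algebra_simps)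
    then show ?thesis using val_ge_unit_mult[OF u] by simp
  qed
  moreover have "x \<in> intvecs v \<Longrightarrow> u *s x \<in> intvecs v" for x
    by (rule scale_intvecs[OF unit_val_ge_0[OF u(1)]])
  ultimately show ?thesis by (auto simp: coset_def)
qed

definition maxideal_vecs :: "('a ^ 'n) set" where "maxideal_vecs = coset 0 1"

lemma maxideal_vecs_iff: "x \<in> maxideal_vecs \<longleftrightarrow> (\<forall>i. val_ge 1 (x $ i))"
  by (auto simp: maxideal_vecs_def coset_def intvecs_iff_val_ge intro: val_ge_mono)

lemma maxideal_vecs_subset: "maxideal_vecs \<subseteq> intvecs v"
  unfolding maxideal_vecs_def by (rule coset_subset)

lemma uniformizer_scale_maxideal_vecs: "x \<in> intvecs v \<Longrightarrow> \<pi> *s x \<in> maxideal_vecs"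
  unfolding maxideal_vecs_iff intvecs_iff_val_ge using val_ge_uniformizer_power_mult[of 1 1] by simp

lemma uniformizer_scale_intvecs: "x \<in> intvecs v \<Longrightarrow> \<pi> *s x \<in> intvecs v"
  using uniformizer_scale_maxideal_vecs maxideal_vecs_subset by blast

lemma uniformizer_scale_vimage_coset:
  assumes c: "c \<in> maxideal_vecs"
  shows "(\<lambda>x. \<pi> *s x) -` coset c (Suc k) \<inter> intvecs v = coset (inverse \<pi> *s c) k"
proof -
  have "\<pi> * x - c $ i = \<pi>^1 * (x - inverse \<pi> * c $ i)" for x i
    using uniformizer_nonzero by (simp add: algebra_simps)
  then have "val_ge (int (Suc k)) (\<pi> * x - c $ i) \<longleftrightarrow> val_ge (int k) (x - inverse \<pi> * c $ i)" for x i
    using val_ge_uniformizer_power_mult[of "int (Suc k)" 1] by simp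
  moreover have "x \<in> intvecs v \<Longrightarrow> \<pi> *s x \<in> intvecs v" for x
    using uniformizer_scale_maxideal_vecs maxideal_vecs_subset by blast
  ultimately show ?thesis by (auto simp: coset_def)
qed

lemma uniformizer_scale_vimage_coset_empty:
  assumes c: "c \<notin> maxideal_vecs"
  shows "(\<lambda>x. \<pi> *s x) -` coset c (Suc k) \<inter> intvecs v = {}"
proof (rule ccontr)
  assume "(\<lambda>x. \<pi> *s x) -` coset c (Suc k) \<inter> intvecs v \<noteq> {}"
  then obtain x where x: "x \<in> intvecs v" "\<pi> *s x \<in> coset c (Suc k)" by blast
  have "val_ge 1 (c $ i)" for i
  proof -
    have "val_ge (int (Suc k)) (\<pi> * x $ i - c $ i)" using x by (simp add: coset_def)
    then have a: "val_ge 1 (\<pi> * x $ i - c $ i)" by (rule val_ge_mono) simp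
    have b: "val_ge 1 (\<pi> * x $ i)"
      using uniformizer_scale_maxideal_vecs[OF x(1)] by (simp add: maxideal_vecs_iff)
    have "c $ i = \<pi> * x $ i - (\<pi> * x $ i - c $ i)" by simp
    then show ?thesis using val_ge_diff[OF b a] by simp
  qed
  then show False using c by (simp add: maxideal_vecs_iff)
qed

lemma maxideal_vecs_inter_coset_Suc:
  assumes "c \<in> intvecs v"
  shows "maxideal_vecs \<inter> coset c (Suc k) = (if c \<in> maxideal_vecs then coset c (Suc k) else {})"
proof (cases "c \<in> maxideal_vecs")
  case True
  then have "coset c 1 = maxideal_vecs" unfolding maxideal_vecs_def by (intro coset_eq)
  then show ?thesis using True coset_antimono[of 1 "Suc k" c] by auto
next
  case False
  have "maxideal_vecs \<inter> coset c (Suc k) = {}"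
  proof (rule ccontr)
    assume "maxideal_vecs \<inter> coset c (Suc k) \<noteq> {}"
    then obtain x where "x \<in> coset 0 1" "x \<in> coset c 1"
      using coset_antimono[of 1 "Suc k" c] by (auto simp: maxideal_vecs_def)
    then have "coset c 1 = maxideal_vecs"
      using coset_eq[of x c 1] coset_eq[of x 0 1] by (simp add: maxideal_vecs_def)
    then show False using False coset_center[OF assms, of 1] by simp
  qed
  then show ?thesis using False by simp
qed

text \<open>A measurable left inverse of scaling by \<open>\<pi>\<close>; it makes images under that scaling measurable.\<close>

definition unscale :: "'a ^ 'n \<Rightarrow> 'a ^ 'n" where
  "unscale x = (if x \<in> maxideal_vecs then inverse \<pi> *s x else 0)"

lemma unscale_intvecs: "unscale x \<in> intvecs v"
  by (auto simp: unscale_def maxideal_vecs_iff intvecs_iff_val_ge val_ge_inverse_uniformizer_mult)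

lemma inverse_uniformizer_scale_mem_coset:
  assumes "x \<in> maxideal_vecs"
  shows "inverse \<pi> *s x \<in> coset c m \<longleftrightarrow> x \<in> coset (\<pi> *s c) (Suc m)"
proof -
  have "x $ i - \<pi> * c $ i = \<pi>^1 * (inverse \<pi> * x $ i - c $ i)" for i
    using uniformizer_nonzero by (simp add: algebra_simps)
  then have "val_ge (int (Suc m)) (x $ i - \<pi> * c $ i) \<longleftrightarrow> val_ge (int m) (inverse \<pi> * x $ i - c $ i)" for i
    using val_ge_uniformizer_power_mult[of "int (Suc m)" 1] by simp
  moreover have "inverse \<pi> *s x \<in> intvecs v"
    using assms by (simp add: maxideal_vecs_iff intvecs_iff_val_ge val_ge_inverse_uniformizer_mult)
  ultimately show ?thesis using assms maxideal_vecs_subset by (auto simp: coset_def)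
qed

lemma coset_uniformizer_scale_subset:
  assumes "c \<in> intvecs v"
  shows "coset (\<pi> *s c) (Suc m) \<subseteq> maxideal_vecs"
proof
  fix x assume x: "x \<in> coset (\<pi> *s c) (Suc m)"
  have "val_ge 1 (x $ i)" for i
  proof -
    have "val_ge (int (Suc m)) (x $ i - \<pi> * c $ i)" using x by (simp add: coset_def)
    then have "val_ge 1 (x $ i - \<pi> * c $ i)" by (rule val_ge_mono) simp
    moreover have "val_ge 1 (\<pi> * c $ i)"
      using uniformizer_scale_maxideal_vecs[OF assms] by (simp add: maxideal_vecs_iff)
    ultimately show ?thesis using val_ge_add by fastforce
  qed
  then show "x \<in> maxideal_vecs" by (simp add: maxideal_vecs_iff)
qed

lemma unscale_vimage_coset:
  assumes "c \<in> intvecs v"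
  shows "unscale -` coset c m \<inter> intvecs v
    = coset (\<pi> *s c) (Suc m) \<union> (if 0 \<in> coset c m then intvecs v - maxideal_vecs else {})"
proof (intro set_eqI)
  fix x
  show "x \<in> unscale -` coset c m \<inter> intvecs v
    \<longleftrightarrow> x \<in> coset (\<pi> *s c) (Suc m) \<union> (if 0 \<in> coset c m then intvecs v - maxideal_vecs else {})"
  proof (cases "x \<in> maxideal_vecs")
    case True
    then show ?thesis
      using inverse_uniformizer_scale_mem_coset[OF True, of c m] maxideal_vecs_subset
      by (auto simp: unscale_def)
  next
    case False
    then show ?thesis using coset_uniformizer_scale_subset[OF assms] by (auto simp: unscale_def)
  qed
qed

definition XBl_set :: "'a ^ 'n \<Rightarrow> nat \<Rightarrow> 'a \<Rightarrow> ('a ^ 'n) set" where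
  "XBl_set a l \<rho> = {x \<in> intvecs v. val_ge (v 2 + int l) (diagQ a x - \<rho>)}"

lemma XBl_set_subset: "XBl_set a l \<rho> \<subseteq> intvecs v" by (auto simp: XBl_set_def)

lemma XBl_set_cong: "val_ge (v 2 + int l) (\<rho> - \<rho>') \<Longrightarrow> XBl_set a l \<rho> = XBl_set a l \<rho>'"
proof -
  assume d: "val_ge (v 2 + int l) (\<rho> - \<rho>')"
  have "val_ge (v 2 + int l) (y - \<rho>) \<longleftrightarrow> val_ge (v 2 + int l) (y - \<rho>')" for y
  proof
    assume "val_ge (v 2 + int l) (y - \<rho>)"
    from val_ge_add[OF this d] show "val_ge (v 2 + int l) (y - \<rho>')" by simp
  next
    assume "val_ge (v 2 + int l) (y - \<rho>')"
    from val_ge_diff[OF this d] show "val_ge (v 2 + int l) (y - \<rho>)" by simp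
  qed
  then show ?thesis by (simp add: XBl_set_def)
qed

lemma XBl_set_unit_square:
  assumes u: "v u = 0" "u \<noteq> 0"
  shows "XBl_set a l (u^2 * \<rho>) = (\<lambda>x. inverse u *s x) -` XBl_set a l \<rho> \<inter> intvecs v"
proof -
  have ui: "val_ge 0 (inverse u)" using u by (simp add: val_ge_def val_inverse)
  have "val_ge (v 2 + int l) (diagQ a x - u^2 * \<rho>) \<longleftrightarrow> val_ge (v 2 + int l) (diagQ a (inverse u *s x) - \<rho>)" for x
  proof -
    have "u * (u * (inverse u * inverse u)) = 1" using u by (simp add: field_simps)
    then have "diagQ a x - u^2 * \<rho> = u^2 * (diagQ a (inverse u *s x) - \<rho>)"
      using u by (simp add: diagQ_scale algebra_simps power2_eq_square)
    moreover have "v (u^2) = 0" "u^2 \<noteq> 0" using u val_power[of u 2] by simp_all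
    ultimately show ?thesis using val_ge_unit_mult by simp
  qed
  moreover have "x \<in> intvecs v \<Longrightarrow> inverse u *s x \<in> intvecs v" for x by (rule scale_intvecs[OF ui])
  ultimately show ?thesis by (auto simp: XBl_set_def)
qed

lemma uniformizer_scale_XBl_set:
  "(\<lambda>x. \<pi> *s x) ` XBl_set a l \<rho> = XBl_set a (l + 2) (\<pi>^2 * \<rho>) \<inter> maxideal_vecs"
proof (intro set_eqI iffI)
  have key: "val_ge (v 2 + int (l + 2)) (diagQ a (\<pi> *s y) - \<pi>^2 * \<rho>) \<longleftrightarrow> val_ge (v 2 + int l) (diagQ a y - \<rho>)" for y
  proof -
    have "diagQ a (\<pi> *s y) - \<pi>^2 * \<rho> = \<pi>^2 * (diagQ a y - \<rho>)"
      by (simp add: diagQ_scale algebra_simps)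
    then show ?thesis using val_ge_uniformizer_power_mult[of "v 2 + int (l + 2)" 2] by simp
  qed
  {
    fix x assume "x \<in> (\<lambda>x. \<pi> *s x) ` XBl_set a l \<rho>"
    then obtain y where y: "y \<in> XBl_set a l \<rho>" "x = \<pi> *s y" by blast
    have yi: "y \<in> intvecs v" using y(1) by (simp add: XBl_set_def)
    show "x \<in> XBl_set a (l + 2) (\<pi>^2 * \<rho>) \<inter> maxideal_vecs"
      using y key[of y] uniformizer_scale_intvecs[OF yi] uniformizer_scale_maxideal_vecs[OF yi] by (simp add: XBl_set_def)
  }
  {
    fix x assume x: "x \<in> XBl_set a (l + 2) (\<pi>^2 * \<rho>) \<inter> maxideal_vecs"
    let ?y = "inverse \<pi> *s x"
    have xe: "x = \<pi> *s ?y" using uniformizer_nonzero by (simp add: vec_eq_iff)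
    have yi: "?y \<in> intvecs v"
      using x by (simp add: maxideal_vecs_iff intvecs_iff_val_ge val_ge_inverse_uniformizer_mult)
    have "val_ge (v 2 + int (l + 2)) (diagQ a (\<pi> *s ?y) - \<pi>^2 * \<rho>)"
      using x xe by (simp add: XBl_set_def)
    then have "?y \<in> XBl_set a l \<rho>" using key[of ?y] yi by (simp add: XBl_set_def)
    then show "x \<in> (\<lambda>x. \<pi> *s x) ` XBl_set a l \<rho>" using xe by blast
  }
qed

definition four_pi :: "nat \<Rightarrow> 'a" where "four_pi m = 4 * \<pi>^(2*m)"

lemma val_ge_four_pi: "val_ge (2 * v 2 + 2 * int m) (four_pi m)"
proof -
  have "val_ge (2 * v 2) (4::'a)" using val_four by (simp add: val_ge_def)
  then show ?thesis unfolding four_pi_def using val_ge_mult[OF _ val_ge_uniformizer_power[of "2*m"]]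
    by simp
qed

lemma four_pi_Suc: "four_pi (Suc m) = \<pi>^2 * four_pi m"
  by (simp add: four_pi_def power_add power2_eq_square algebra_simps)

definition shell :: "nat \<Rightarrow> 'a set" where "shell T = {t. t \<noteq> 0 \<and> v t = int T}"

lemma unit_filtr_0_eq_shell: "unit_filtr v \<pi> 0 = shell 0" unfolding unit_filtr_def shell_def by simp

lemma shell_eq_image: "shell T = (\<lambda>u. \<pi>^T * u) ` unit_filtr v \<pi> 0"
proof (intro set_eqI iffI)
  fix t assume t: "t \<in> shell T"
  have "t = \<pi>^T * (t / \<pi>^T)" using uniformizer_nonzero by simp
  moreover have "t / \<pi>^T \<in> unit_filtr v \<pi> 0"
    using t uniformizer_nonzero
    by (simp add: shell_def unit_filtr_def val_divide val_uniformizer_power)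
  ultimately show "t \<in> (\<lambda>u. \<pi>^T * u) ` unit_filtr v \<pi> 0" by blast
next
  fix t assume "t \<in> (\<lambda>u. \<pi>^T * u) ` unit_filtr v \<pi> 0"
  then obtain u where "u \<noteq> 0" "v u = 0" "t = \<pi>^T * u" by (auto simp: unit_filtr_def)
  then show "t \<in> shell T"
    using uniformizer_nonzero by (simp add: shell_def val_mult val_uniformizer_power)
qed

lemma shell_disjoint: "S \<noteq> T \<Longrightarrow> shell S \<inter> shell T = {}" by (auto simp: shell_def)

lemma valring_iff_shell: "t \<in> valring v - {0} \<longleftrightarrow> t \<in> shell (nat (v t))"
  by (auto simp: shell_def valring_def)

lemma shell_subset_valring: "t \<in> shell T \<Longrightarrow> t \<in> valring v - {0}"
  by (auto simp: shell_def valring_def)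

lemma absv_powr: assumes t: "t \<noteq> 0" "v t = int T"
  shows "complex_of_real (absv v q t) powr \<alpha> = qpowr \<alpha> ^ T"
proof -
  have q: "0 < real q" using card_residue_field_ge_2 by simp
  have "absv v q t = real q powr (- real T)" using t by (simp add: absv_def)
  then have "complex_of_real (absv v q t) powr \<alpha> = exp (\<alpha> * of_real (- real T * ln (real q)))"
    using q by (simp add: powr_of_real_exp ln_powr)
  also have "\<dots> = exp (of_nat T * (- \<alpha> * of_real (ln (real q))))" by (simp add: algebra_simps)
  also have "\<dots> = exp (- \<alpha> * of_real (ln (real q))) ^ T" by (rule exp_of_nat_mult)
  also have "\<dots> = qpowr \<alpha> ^ T" using q by (simp add: powr_of_nat_exp)
  finally show ?thesis .
qed

end

locale anisotropic_form = local_field_res2 +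
  fixes a :: "'a ^ 'n"
  assumes anisotropic: "\<forall>x. diagQ a x = 0 \<longrightarrow> x = 0"
    and val_coeffs: "\<forall>i. 0 \<le> v (a $ i) \<and> v (a $ i) \<le> 1"
begin

lemma coeff_nonzero: "a $ i \<noteq> 0"
proof
  assume "a $ i = 0"
  then have "diagQ a (axis i 1) = 0"
    unfolding diagQ_def by (intro sum.neutral) (simp add: axis_def)
  then have "axis i (1::'a) = 0" using anisotropic by blast
  then show False by (metis axis_nth zero_index zero_neq_one)
qed

lemma diagQ_val_bound_of_unit_coord:
  fixes x :: "'a ^ 'n"
  assumes xi: "val_ge 0 (x $ i)" "\<not> val_ge 1 (x $ i)"
  shows "\<not> val_ge (2 * v 2 + 2) (diagQ a x)"
proof
  assume B: "val_ge (2 * v 2 + 2) (diagQ a x)"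
  let ?B = "diagQ a x"
  have xnz: "x $ i \<noteq> 0" and vx: "v (x $ i) = 0" using xi by (auto simp: val_ge_def)
  let ?d = "a $ i * (x $ i)^2"
  have dnz: "?d \<noteq> 0" using coeff_nonzero xnz by simp
  have vd: "v ?d = v (a $ i)" using val_mult[OF coeff_nonzero] val_mult[OF xnz xnz] xnz vx
    by (simp add: power2_eq_square)
  define c where "c = - ?B / (4 * ?d)"
  have c1: "val_ge 1 c"
  proof (cases "?B = 0")
    case True then show ?thesis by (simp add: c_def)
  next
    case False
    have "v c = v ?B - (2 * v 2 + v (a $ i))"
      unfolding c_def using False dnz four_nonzero vd by (simp add: val_divide val_minus val_mult val_four)
    moreover have "2 * v 2 + 2 \<le> v ?B" using B False by (simp add: val_ge_def)
    ultimately have "1 \<le> v c" using val_coeffs[rule_format, of i] by linarith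
    then show ?thesis by (simp add: val_ge_def)
  qed
  obtain s where s: "s^2 = 1 + 4 * c" using one_plus_four_is_square[OF c1] by blast
  have s2: "s^2 = 1 - ?B / ?d" using s four_nonzero by (simp add: c_def)
  define y where "y = (\<chi> j. if j = i then x $ i * s else x $ j)"
  have "diagQ a y = ?B + ?d * (s^2 - 1)" unfolding y_def by (rule diagQ_scale_coord)
  moreover have "?d * (s^2 - 1) = - ?B" using s2 dnz by simp
  ultimately have "diagQ a y = 0" by simp
  then have "y = 0" using anisotropic by blast
  moreover have "y $ i = x $ i * s" unfolding y_def by simp
  ultimately have "x $ i * s = 0" by simp
  then have "s = 0" using xnz by simp
  then have "?B = ?d" using s2 dnz by (simp add: field_simps)
  then have "2 * v 2 + 2 \<le> v (a $ i)" using B dnz vd by (auto simp: val_ge_def)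
  then show False using val_coeffs[rule_format, of i] val_two_pos by linarith
qed

lemma XBl_set_subset_maxideal_vecs:
  assumes l: "v 2 \<le> int l" and \<rho>: "val_ge (2 * v 2 + 2) \<rho>"
  shows "XBl_set a (l + 2) \<rho> \<subseteq> maxideal_vecs"
proof
  fix x assume x: "x \<in> XBl_set a (l + 2) \<rho>"
  then have xi: "x \<in> intvecs v" and d: "val_ge (v 2 + int (l + 2)) (diagQ a x - \<rho>)"
    by (auto simp: XBl_set_def)
  have "val_ge (2 * v 2 + 2) (diagQ a x - \<rho>)" using d by (rule val_ge_mono) (use l in simp)
  then have B: "val_ge (2 * v 2 + 2) (diagQ a x)" using val_ge_add[OF _ \<rho>] by fastforce
  show "x \<in> maxideal_vecs"
  proof (rule ccontr)
    assume "x \<notin> maxideal_vecs"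
    then obtain i where "\<not> val_ge 1 (x $ i)" by (auto simp: maxideal_vecs_iff)
    moreover have "val_ge 0 (x $ i)" using xi by (simp add: intvecs_iff_val_ge)
    ultimately show False using diagQ_val_bound_of_unit_coord B by blast
  qed
qed

end

locale local_field_haar = local_field_res2 v \<pi> q for v :: "'a::field \<Rightarrow> int" and \<pi> q +
  fixes M :: "('a ^ 'n) measure"
  assumes haar: "is_additive_haar_prob v \<pi> M"
begin

lemma space_M: "space M = intvecs v" and sets_M: "sets M = sigma_sets (intvecs v) (add_cosets v \<pi>)"
  and emeasure_translate: "\<And>A c. A \<in> sets M \<Longrightarrow> c \<in> intvecs v \<Longrightarrow> emeasure M ((\<lambda>x. x + c) ` A) = emeasure M A"
  and emeasure_space_M: "emeasure M (space M) = 1"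
  using haar unfolding is_additive_haar_prob_def by blast+

lemma finite_measure_M: "finite_measure M" by (rule finite_measureI) (simp add: emeasure_space_M)

lemma emeasure_M_finite: "emeasure M A \<noteq> \<infinity>"
  using finite_measure.emeasure_finite[OF finite_measure_M] by simp

lemma coset_sets: "c \<in> intvecs v \<Longrightarrow> coset c m \<in> sets M"
  unfolding sets_M add_cosets_eq by (rule sigma_sets.Basic) blast

lemma add_cosets_subset: "add_cosets v \<pi> \<subseteq> Pow (intvecs v)"
  unfolding add_cosets_eq using coset_subset by blast

lemma sets_M_insert_empty: "sets M = sigma_sets (intvecs v) (insert {} (add_cosets v \<pi>))"
  unfolding sets_M
  by (rule sigma_sets_eqI) (auto intro: sigma_sets.Basic sigma_sets.Empty)

lemma Int_stable_cosets: "Int_stable (insert {} (add_cosets v \<pi> :: ('a^'n) set set))"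
  unfolding Int_stable_def add_cosets_eq
proof (intro ballI)
  fix a b :: "('a^'n) set"
  assume "a \<in> insert {} {coset c m |c m. c \<in> intvecs v}" "b \<in> insert {} {coset c m |c m. c \<in> intvecs v}"
  then show "a \<inter> b \<in> insert {} {coset c m |c m. c \<in> intvecs v}"
  proof (elim insertE)
    assume "a \<in> {coset c m |c m. c \<in> intvecs v}" "b \<in> {coset c m |c m. c \<in> intvecs v}"
    then obtain c m d k where "a = coset c m" "b = coset d k" "c \<in> intvecs v" "d \<in> intvecs v"
      by blast
    then show ?thesis using coset_inter[of c m d k] by blast
  qed auto
qed

lemma measure_eqI_cosets:
  assumes s1: "sets K1 = sets M" and s2: "sets K2 = sets M"
    and eq: "\<And>c m. c \<in> intvecs v \<Longrightarrow> emeasure K1 (coset c m) = emeasure K2 (coset c m)"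
    and fin: "emeasure K1 (intvecs v) \<noteq> \<infinity>"
  shows "K1 = K2"
proof (rule measure_eqI_generator_eq[OF Int_stable_cosets, of "intvecs v" K1 K2 "\<lambda>_. (intvecs v :: ('a^'n) set)"])
  show "insert {} (add_cosets v \<pi>) \<subseteq> Pow (intvecs v)" using add_cosets_subset by blast
  show "\<And>X. X \<in> insert {} (add_cosets v \<pi>) \<Longrightarrow> emeasure K1 X = emeasure K2 X"
    unfolding add_cosets_eq using eq by auto
  show "sets K1 = sigma_sets (intvecs v) (insert {} (add_cosets v \<pi>))"
    using s1 sets_M_insert_empty by simp
  show "sets K2 = sigma_sets (intvecs v) (insert {} (add_cosets v \<pi>))"
    using s2 sets_M_insert_empty by simp
  have z: "(0::'a^'n) \<in> intvecs v" by (simp add: intvecs_iff_val_ge)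
  then have "intvecs v = coset (0::'a^'n) 0" by (rule coset_0[symmetric])
  then have "(intvecs v :: ('a^'n) set) \<in> add_cosets v \<pi>" unfolding add_cosets_eq using z by blast
  then show "range (\<lambda>_. intvecs v) \<subseteq> insert {} (add_cosets v \<pi> :: ('a^'n) set set)" by auto
  show "(\<Union>i. intvecs v) = intvecs v" by simp
  show "\<And>i. emeasure K1 (intvecs v) \<noteq> \<infinity>" using fin .
qed

lemma measurable_by_cosets:
  assumes "f \<in> intvecs v \<rightarrow> intvecs v"
    and "\<And>c m. c \<in> intvecs v \<Longrightarrow> f -` coset c m \<inter> intvecs v \<in> sets M"
  shows "f \<in> measurable M M"
proof (rule measurable_sigma_sets[OF sets_M add_cosets_subset])
  show "f \<in> space M \<rightarrow> intvecs v" using assms(1) space_M by simp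
  show "\<And>y. y \<in> add_cosets v \<pi> \<Longrightarrow> f -` y \<inter> space M \<in> sets M"
    unfolding add_cosets_eq space_M using assms(2) by blast
qed

lemma measure_coset_translate:
  assumes "c \<in> intvecs v" "d \<in> intvecs v"
  shows "measure M (coset c m) = measure M (coset d m)"
proof -
  have "emeasure M (coset d m) = emeasure M ((\<lambda>x. x + (d - c)) ` coset c m)"
    using coset_translate[OF assms] by simp
  also have "\<dots> = emeasure M (coset c m)"
    using emeasure_translate[OF coset_sets[OF assms(1)]] assms by (simp add: intvecs_iff_val_ge val_ge_diff)
  finally show ?thesis by (simp add: measure_def)
qed

lemma measure_coset_Suc:
  assumes c: "c \<in> intvecs v"
  shows "measure M (coset c m) = real q ^ CARD('n) * measure M (coset c (Suc m))"
proof -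
  have ci: "c + \<pi>^m *s r \<in> intvecs v" if "r \<in> residue_rep_vecs" for r
  proof -
    have "val_ge 0 (\<pi>^m)" using val_ge_uniformizer_power[of m] by (rule val_ge_mono) simp
    then show ?thesis using c residue_rep_vecs_intvecs[OF that] by (simp add: intvecs_iff_val_ge val_ge_add val_ge_mult_integral_left)
  qed
  have "measure M (coset c m) = (\<Sum>r\<in>residue_rep_vecs. measure M (coset (c + \<pi>^m *s r) (Suc m)))"
    unfolding coset_split[OF c, of m]
  proof (rule measure_finite_Union)
    show "finite (residue_rep_vecs :: ('a^'n) set)" by (rule residue_rep_vecs_card(1))
    show "(\<lambda>r. coset (c + (\<pi> ^ m) *s r) (Suc m)) ` residue_rep_vecs \<subseteq> sets M"
      using ci coset_sets by blast
    show "disjoint_family_on (\<lambda>r. coset (c + (\<pi> ^ m) *s r) (Suc m)) residue_rep_vecs"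
      by (rule coset_split_disjoint)
    show "\<And>i. emeasure M (coset (c + (\<pi> ^ m) *s i) (Suc m)) \<noteq> \<infinity>" by (rule emeasure_M_finite)
  qed
  also have "\<dots> = (\<Sum>r\<in>(residue_rep_vecs::('a^'n) set). measure M (coset c (Suc m)))"
    using ci c measure_coset_translate by (intro sum.cong refl) blast
  also have "\<dots> = real q ^ CARD('n) * measure M (coset c (Suc m))"
  proof -
    have "card (residue_rep_vecs::('a^'n) set) = q ^ CARD('n)" by (rule residue_rep_vecs_card(2))
    then show ?thesis by simp
  qed
  finally show ?thesis .
qed

lemma measure_coset: assumes c: "c \<in> intvecs v"
  shows "measure M (coset c m) = 1 / real q ^ (CARD('n) * m)"
proof (induction m)
  case 0
  have "measure M (coset c 0) = 1"
    using coset_0[OF c] emeasure_space_M space_M by (simp add: measure_def)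
  then show ?case by simp
next
  case (Suc m)
  have q: "real q ^ CARD('n) > 0" using card_residue_field_ge_2 by simp
  have "real q ^ (CARD('n) * Suc m) = real q ^ CARD('n) * real q ^ (CARD('n) * m)"
    by (simp add: power_add)
  then show ?case using measure_coset_Suc[OF c, of m] Suc q
    by (simp add: field_simps)
qed

lemma emeasure_coset: "c \<in> intvecs v \<Longrightarrow> emeasure M (coset c m) = ennreal (1 / real q ^ (CARD('n) * m))"
  using measure_coset finite_measure.emeasure_eq_measure[OF finite_measure_M] by simp

lemma unit_scale_measurable:
  assumes u: "v u = 0" "u \<noteq> 0"
  shows "(\<lambda>x. u *s x) \<in> measurable M M"
proof (rule measurable_by_cosets)
  show "(\<lambda>x. u *s x) \<in> intvecs v \<rightarrow> intvecs v"
    using scale_intvecs[OF unit_val_ge_0[OF u(1)]] by blast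
  fix c :: "'a^'n" and m assume c: "c \<in> intvecs v"
  have "inverse u *s c \<in> intvecs v" using scale_intvecs[OF unit_inverse_val_ge_0[OF u] c] .
  then show "(\<lambda>x. u *s x) -` coset c m \<inter> intvecs v \<in> sets M"
    unfolding unit_scale_vimage_coset[OF u] by (rule coset_sets)
qed

lemma distr_unit_scale:
  assumes u: "v u = 0" "u \<noteq> 0"
  shows "distr M M (\<lambda>x. u *s x) = M"
proof (rule measure_eqI_cosets[OF _ refl])
  show "sets (distr M M (\<lambda>x. u *s x)) = sets M" by simp
  show "emeasure (distr M M (\<lambda>x. u *s x)) (intvecs v) \<noteq> \<infinity>"
    using emeasure_distr[OF unit_scale_measurable[OF u] sets.top] space_M emeasure_M_finite by simp
  fix c :: "'a^'n" and m assume c: "c \<in> intvecs v"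
  have c': "inverse u *s c \<in> intvecs v" using scale_intvecs[OF unit_inverse_val_ge_0[OF u] c] .
  have "emeasure (distr M M (\<lambda>x. u *s x)) (coset c m) = emeasure M ((\<lambda>x. u *s x) -` coset c m \<inter> space M)"
    using unit_scale_measurable[OF u] coset_sets[OF c] by (rule emeasure_distr)
  also have "\<dots> = emeasure M (coset (inverse u *s c) m)"
    unfolding space_M unit_scale_vimage_coset[OF u] ..
  also have "\<dots> = emeasure M (coset c m)" using emeasure_coset c c' by simp
  finally show "emeasure (distr M M (\<lambda>x. u *s x)) (coset c m) = emeasure M (coset c m)" .
qed

lemma measure_unit_scale_vimage:
  assumes u: "v u = 0" "u \<noteq> 0" and S: "S \<subseteq> intvecs v"
  shows "measure M ((\<lambda>x. u *s x) -` S \<inter> intvecs v) = measure M S"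
proof -
  have u': "v (inverse u) = 0" "inverse u \<noteq> 0" using u by (simp_all add: val_inverse)
  show ?thesis
    using measure_vimage_eq_of_distr[OF unit_scale_measurable[OF u] unit_scale_measurable[OF u'] _
        distr_unit_scale[OF u], of S] S space_M u
    by (simp add: vec_eq_iff vector_scalar_mult_def)
qed

lemma maxideal_vecs_sets: "maxideal_vecs \<in> sets M"
  unfolding maxideal_vecs_def by (rule coset_sets) (simp add: intvecs_iff_val_ge)

lemma uniformizer_scale_measurable: "(\<lambda>x. \<pi> *s x) \<in> measurable M M"
proof (rule measurable_by_cosets)
  show "(\<lambda>x. \<pi> *s x) \<in> intvecs v \<rightarrow> intvecs v" using uniformizer_scale_intvecs by blast
  fix c :: "'a^'n" and m assume c: "c \<in> intvecs v"
  show "(\<lambda>x. \<pi> *s x) -` coset c m \<inter> intvecs v \<in> sets M"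
  proof (cases m)
    case 0
    have "(\<lambda>x. \<pi> *s x) -` coset c m \<inter> intvecs v = space M"
      using 0 coset_0[OF c] space_M uniformizer_scale_intvecs by auto
    then show ?thesis by simp
  next
    case (Suc k)
    show ?thesis
    proof (cases "c \<in> maxideal_vecs")
      case True
      have "inverse \<pi> *s c \<in> intvecs v"
        using True
        by (simp add: maxideal_vecs_iff intvecs_iff_val_ge val_ge_inverse_uniformizer_mult)
      then show ?thesis unfolding Suc uniformizer_scale_vimage_coset[OF True] by (rule coset_sets)
    next
      case False
      then show ?thesis unfolding Suc uniformizer_scale_vimage_coset_empty[OF False] by simp
    qed
  qed
qed

lemma unscale_measurable: "unscale \<in> measurable M M"
proof (rule measurable_by_cosets)
  show "unscale \<in> intvecs v \<rightarrow> intvecs v" using unscale_intvecs by blast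
  fix c :: "'a^'n" and m assume c: "c \<in> intvecs v"
  have c': "\<pi> *s c \<in> intvecs v" using uniformizer_scale_intvecs[OF c] .
  have "intvecs v - maxideal_vecs \<in> sets M"
    using maxideal_vecs_sets space_M sets.compl_sets by metis
  then show "unscale -` coset c m \<inter> intvecs v \<in> sets M"
    unfolding unscale_vimage_coset[OF c] using coset_sets[OF c'] by auto
qed

lemma uniformizer_scale_image:
  assumes S: "(S :: ('a^'n) set) \<subseteq> intvecs v"
  shows "(\<lambda>x. \<pi> *s x) ` S = unscale -` S \<inter> intvecs v \<inter> maxideal_vecs"
proof (intro set_eqI iffI)
  fix x assume "x \<in> (\<lambda>x. \<pi> *s x) ` S"
  then obtain y where y: "y \<in> S" "x = \<pi> *s y" by blast
  have yi: "y \<in> intvecs v" using y S by blast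
  have xP: "x \<in> maxideal_vecs" using uniformizer_scale_maxideal_vecs[OF yi] y by simp
  have "unscale x = inverse \<pi> *s x" using xP by (simp add: unscale_def)
  also have "\<dots> = y" using y(2) uniformizer_nonzero by (simp add: vec_eq_iff)
  finally have "unscale x = y" .
  then show "x \<in> unscale -` S \<inter> intvecs v \<inter> maxideal_vecs"
    using y xP uniformizer_scale_intvecs[OF yi] by auto
next
  fix x assume x: "x \<in> unscale -` S \<inter> intvecs v \<inter> maxideal_vecs"
  then have "x \<in> maxideal_vecs" "unscale x \<in> S" by auto
  then have "inverse \<pi> *s x \<in> S" by (simp add: unscale_def)
  moreover have "x = \<pi> *s (inverse \<pi> *s x)" using uniformizer_nonzero by (simp add: vec_eq_iff)
  ultimately show "x \<in> (\<lambda>x. \<pi> *s x) ` S" by blast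
qed

lemma uniformizer_scale_vimage_image:
  assumes S: "(S :: ('a^'n) set) \<subseteq> intvecs v"
  shows "(\<lambda>x. \<pi> *s x) -` ((\<lambda>x. \<pi> *s x) ` S) \<inter> intvecs v = S"
proof -
  have inj: "inj ((\<lambda>x. \<pi> *s x) :: 'a^'n \<Rightarrow> 'a^'n)"
    using uniformizer_nonzero by (auto simp: inj_def vec_eq_iff)
  show ?thesis using S uniformizer_scale_intvecs by (auto dest: injD[OF inj])
qed

definition maxideal_density :: "('a ^ 'n) measure" where
  "maxideal_density = density M (\<lambda>x. ennreal (real q ^ CARD('n)) * indicator maxideal_vecs x)"

lemma emeasure_maxideal_density:
  "A \<in> sets M \<Longrightarrow> emeasure maxideal_density A = ennreal (real q ^ CARD('n)) * emeasure M (maxideal_vecs \<inter> A)"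
proof -
  assume A: "A \<in> sets M"
  note maxideal_vecs_sets[measurable]
  have "emeasure maxideal_density A = (\<integral>\<^sup>+ x. ennreal (real q ^ CARD('n)) * indicator maxideal_vecs x * indicator A x \<partial>M)"
    unfolding maxideal_density_def using A by (intro emeasure_density) auto
  also have "\<dots> = (\<integral>\<^sup>+ x. ennreal (real q ^ CARD('n)) * indicator (maxideal_vecs \<inter> A) x \<partial>M)"
    by (simp add: indicator_inter_arith mult.assoc)
  also have "\<dots> = ennreal (real q ^ CARD('n)) * emeasure M (maxideal_vecs \<inter> A)"
    using A maxideal_vecs_sets by (intro nn_integral_cmult_indicator) auto
  finally show ?thesis .
qed

lemma distr_uniformizer_scale: "distr M M (\<lambda>x. \<pi> *s x) = maxideal_density"
proof (rule measure_eqI_cosets)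
  show "sets (distr M M (\<lambda>x. \<pi> *s x)) = sets M" by simp
  show "sets maxideal_density = sets M" by (simp add: maxideal_density_def)
  show "emeasure (distr M M (\<lambda>x. \<pi> *s x)) (intvecs v) \<noteq> \<infinity>"
    using emeasure_distr[OF uniformizer_scale_measurable sets.top] space_M emeasure_M_finite by simp
  fix c :: "'a^'n" and m assume c: "c \<in> intvecs v"
  have qp: "real q > 0" using card_residue_field_ge_2 by simp
  have ed: "emeasure (distr M M (\<lambda>x. \<pi> *s x)) (coset c m) = emeasure M ((\<lambda>x. \<pi> *s x) -` coset c m \<inter> intvecs v)"
    using emeasure_distr[OF uniformizer_scale_measurable coset_sets[OF c]] space_M by simp
  have eD: "emeasure maxideal_density (coset c m) = ennreal (real q ^ CARD('n)) * emeasure M (maxideal_vecs \<inter> coset c m)"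
    using emeasure_maxideal_density[OF coset_sets[OF c]] .
  show "emeasure (distr M M (\<lambda>x. \<pi> *s x)) (coset c m) = emeasure maxideal_density (coset c m)"
  proof (cases m)
    case 0
    have "(\<lambda>x. \<pi> *s x) -` coset c m \<inter> intvecs v = intvecs v"
      using 0 coset_0[OF c] uniformizer_scale_intvecs by auto
    moreover have "maxideal_vecs \<inter> coset c m = coset 0 1"
      using 0 coset_0[OF c] maxideal_vecs_subset by (auto simp: maxideal_vecs_def)
    ultimately show ?thesis
      using ed eD emeasure_space_M space_M emeasure_coset[of 0 1] qp
      by (simp add: intvecs_iff_val_ge ennreal_mult[symmetric])
  next
    case (Suc k)
    show ?thesis
    proof (cases "c \<in> maxideal_vecs")
      case True
      have "inverse \<pi> *s c \<in> intvecs v"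
        using True by (simp add: maxideal_vecs_iff intvecs_iff_val_ge val_ge_inverse_uniformizer_mult)
      then have "emeasure (distr M M (\<lambda>x. \<pi> *s x)) (coset c m) = ennreal (1 / real q ^ (CARD('n) * k))"
        using ed uniformizer_scale_vimage_coset[OF True] Suc emeasure_coset by simp
      moreover have "real q ^ CARD('n) * (1 / real q ^ (CARD('n) * Suc k)) = 1 / real q ^ (CARD('n) * k)"
        using qp by (simp add: power_add field_simps)
      ultimately show ?thesis
        using eD maxideal_vecs_inter_coset_Suc[OF c] True Suc emeasure_coset[OF c] qp
        by (simp add: ennreal_mult[symmetric])
    next
      case False
      then show ?thesis
        using ed eD maxideal_vecs_inter_coset_Suc[OF c] uniformizer_scale_vimage_coset_empty[OF False] Suc
        by simp
    qed
  qed
qed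

lemma measure_uniformizer_scale_image:
  assumes S: "S \<subseteq> intvecs v"
  shows "measure M ((\<lambda>x. \<pi> *s x) ` S) = measure M S / real q ^ CARD('n)"
proof (cases "S \<in> sets M")
  case True
  have img: "(\<lambda>x. \<pi> *s x) ` S \<in> sets M"
  proof -
    have "unscale -` S \<inter> space M \<in> sets M" using measurable_sets[OF unscale_measurable True] .
    then have "unscale -` S \<inter> intvecs v \<inter> maxideal_vecs \<in> sets M"
      using maxideal_vecs_sets space_M by auto
    then show ?thesis using uniformizer_scale_image[OF S] by simp
  qed
  have sub: "(\<lambda>x. \<pi> *s x) ` S \<subseteq> maxideal_vecs"
    using S by (auto intro: uniformizer_scale_maxideal_vecs)
  have "measure M S = measure M ((\<lambda>x. \<pi> *s x) -` ((\<lambda>x. \<pi> *s x) ` S) \<inter> space M)"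
    using uniformizer_scale_vimage_image[OF S] space_M by simp
  also have "\<dots> = measure (distr M M (\<lambda>x. \<pi> *s x)) ((\<lambda>x. \<pi> *s x) ` S)"
    using measure_distr[OF uniformizer_scale_measurable img] by simp
  also have "\<dots> = measure maxideal_density ((\<lambda>x. \<pi> *s x) ` S)" using distr_uniformizer_scale by simp
  also have "\<dots> = real q ^ CARD('n) * measure M ((\<lambda>x. \<pi> *s x) ` S)"
    unfolding measure_def emeasure_maxideal_density[OF img] using sub
    by (simp add: Int_absorb1 enn2real_mult)
  finally show ?thesis using card_residue_field_ge_2 by (simp add: field_simps)
next
  case False
  have "(\<lambda>x. \<pi> *s x) ` S \<notin> sets M"
  proof
    assume "(\<lambda>x. \<pi> *s x) ` S \<in> sets M"
    then have "(\<lambda>x. \<pi> *s x) -` ((\<lambda>x. \<pi> *s x) ` S) \<inter> space M \<in> sets M"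
      by (rule measurable_sets[OF uniformizer_scale_measurable])
    then show False using uniformizer_scale_vimage_image[OF S] space_M False by simp
  qed
  then show ?thesis using False by (simp add: measure_notin_sets)
qed

lemma XBl_eq_measure: "XBl v \<pi> M a l \<rho> = measure M (XBl_set a l \<rho>)"
  unfolding XBl_def XBl_set_def two_uniformizer_multiple_iff_val_ge ..

lemma XBl_unit_square:
  assumes u: "v u = 0" "u \<noteq> 0"
  shows "XBl v \<pi> M (a::'a^'n) l (u^2 * \<rho>) = XBl v \<pi> M a l \<rho>"
proof -
  have u': "v (inverse u) = 0" "inverse u \<noteq> 0" using u by (simp_all add: val_inverse)
  show ?thesis unfolding XBl_eq_measure XBl_set_unit_square[OF u]
    using measure_unit_scale_vimage[OF u' XBl_set_subset] .
qed

lemma XBl_uniformizer_shift: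
  assumes "XBl_set (a::'a^'n) (l + 2) (\<pi>^2 * \<rho>) \<subseteq> maxideal_vecs"
  shows "XBl v \<pi> M a (l + 2) (\<pi>^2 * \<rho>) = XBl v \<pi> M a l \<rho> / real q ^ CARD('n)"
proof -
  have "XBl_set a (l + 2) (\<pi>^2 * \<rho>) = (\<lambda>x. \<pi> *s x) ` XBl_set a l \<rho>"
    using uniformizer_scale_XBl_set assms by blast
  then show ?thesis unfolding XBl_eq_measure using measure_uniformizer_scale_image[OF XBl_set_subset] by simp
qed

lemma XBl_four_pi_low:
  assumes "int l \<le> v 2 + 2 * int m"
  shows "XBl v \<pi> M (a::'a^'n) l (four_pi m) = XBl v \<pi> M a l 0"
proof -
  have "val_ge (v 2 + int l) (four_pi m)"
    using val_ge_four_pi[of m] by (rule val_ge_mono) (use assms val_two_pos in simp)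
  then have "val_ge (v 2 + int l) (four_pi m - 0)" by simp
  then show ?thesis unfolding XBl_eq_measure using XBl_set_cong by metis
qed

lemma XBl_four_pi_Suc_low: "l < 2 \<Longrightarrow> XBl v \<pi> M (a::'a^'n) l (four_pi (Suc m)) = XBl v \<pi> M a l 0"
  using val_two_pos by (intro XBl_four_pi_low) simp

lemma XBl_bounds: "0 \<le> XBl v \<pi> M (a::'a^'n) l \<rho>" "XBl v \<pi> M (a::'a^'n) l \<rho> \<le> 1"
proof -
  show "0 \<le> XBl v \<pi> M a l \<rho>" by (simp add: XBl_eq_measure)
  have "measure M (XBl_set a l \<rho>) \<le> measure M (space M)"
    using finite_measure.bounded_measure[OF finite_measure_M] by simp
  then show "XBl v \<pi> M a l \<rho> \<le> 1" using emeasure_space_M by (simp add: XBl_eq_measure measure_def)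
qed

lemma XB_term_norm_le: "norm ((qpowr \<beta>)^l * complex_of_real (XBl v \<pi> M (a::'a^'n) l \<rho>)) \<le> norm (qpowr \<beta>) ^ l"
proof -
  have "norm (complex_of_real (XBl v \<pi> M a l \<rho>)) \<le> 1" using XBl_bounds[of a l \<rho>] by simp
  then show ?thesis by (simp add: norm_mult norm_power mult_left_le)
qed

lemma XB_summable: "0 < Re \<beta> \<Longrightarrow> summable (\<lambda>l. (qpowr \<beta>)^l * complex_of_real (XBl v \<pi> M (a::'a^'n) l \<rho>))"
  by (rule summable_comparison_test'[OF summable_geometric[of "norm (qpowr \<beta>)"] XB_term_norm_le])
     (use norm_qpowr_less_1 in simp)

lemma norm_XB_le: "0 < Re \<beta> \<Longrightarrow> norm (XB v \<pi> q M (a::'a^'n) \<beta> \<rho>) \<le> 1 / (1 - norm (qpowr \<beta>))"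
proof -
  assume b: "0 < Re \<beta>"
  have s: "summable (\<lambda>l. norm ((qpowr \<beta>)^l * complex_of_real (XBl v \<pi> M a l \<rho>)))"
    by (rule summable_comparison_test'[OF summable_geometric[of "norm (qpowr \<beta>)"]])
      (use norm_qpowr_less_1[OF b] XB_term_norm_le in simp_all)
  have "norm (XB v \<pi> q M a \<beta> \<rho>) \<le> (\<Sum>l. norm ((qpowr \<beta>)^l * complex_of_real (XBl v \<pi> M a l \<rho>)))"
    unfolding XB_def by (rule summable_norm[OF s])
  also have "\<dots> \<le> (\<Sum>l. norm (qpowr \<beta>) ^ l)"
    using s norm_qpowr_less_1[OF b] XB_term_norm_le by (intro suminf_le) auto
  also have "\<dots> = 1 / (1 - norm (qpowr \<beta>))"
    using norm_qpowr_less_1[OF b] by (simp add: suminf_geometric)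
  finally show ?thesis .
qed

lemma XB_unit_square:
  assumes u: "v u = 0" "u \<noteq> 0"
  shows "XB v \<pi> q M (a::'a^'n) \<beta> (u^2 * \<rho>) = XB v \<pi> q M a \<beta> \<rho>"
  unfolding XB_def using XBl_unit_square[OF u] by simp

end

locale PiB_measures = local_field_haar v \<pi> q M
  for v :: "'a::field \<Rightarrow> int" and \<pi> q and M :: "('a ^ 'n) measure" +
  fixes N :: "'a measure"
  assumes haarN: "is_mult_haar v \<pi> N"
begin

lemma sets_N: "sets N = sigma_sets {x. x \<noteq> 0} (mult_cosets v \<pi>)"
  and emeasure_N_units: "emeasure N (unit_filtr v \<pi> 0) = 1"
  using haarN by (simp_all add: is_mult_haar_def)

lemma emeasure_N_mult: "A \<in> sets N \<Longrightarrow> c \<noteq> 0 \<Longrightarrow> emeasure N ((\<lambda>u. c * u) ` A) = emeasure N A"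
  using haarN[unfolded is_mult_haar_def, THEN conjunct2, THEN conjunct2, THEN conjunct1] by blast

lemma shell_sets: "shell T \<in> sets N"
proof -
  have "(\<lambda>u. \<pi>^T * u) ` unit_filtr v \<pi> 0 \<in> mult_cosets v \<pi>"
    unfolding mult_cosets_def using uniformizer_nonzero
    by (intro CollectI exI[of _ "\<pi>^T"] exI[of _ "0::nat"] conjI refl) simp
  then show ?thesis unfolding sets_N shell_eq_image by (rule sigma_sets.Basic)
qed

lemma unit_filtr_0_sets: "unit_filtr v \<pi> 0 \<in> sets N"
  using shell_sets[of 0] unit_filtr_0_eq_shell by simp

lemma emeasure_shell: "emeasure N (shell T) = 1"
  unfolding shell_eq_image using emeasure_N_mult[OF unit_filtr_0_sets, of "\<pi>^T"] uniformizer_nonzero emeasure_N_units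
    by simp

lemma measure_shell: "measure N (shell T) = 1"
  using emeasure_shell by (simp add: measure_def)

definition XB_shell :: "'a ^ 'n \<Rightarrow> complex \<Rightarrow> nat \<Rightarrow> complex" where
  "XB_shell a \<beta> T =
    (if T < ram_index then XB v \<pi> q M a \<beta> (\<pi>^(2*T)) else XB v \<pi> q M a \<beta> (four_pi (T - ram_index)))"

definition PiB_term :: "'a ^ 'n \<Rightarrow> complex \<Rightarrow> complex \<Rightarrow> nat \<Rightarrow> complex" where
  "PiB_term a \<alpha> \<beta> T = qpowr \<alpha> ^ T * XB_shell a \<beta> T"

lemma XB_square_of_shell:
  assumes t: "t \<in> shell T"
  shows "XB v \<pi> q M (a::'a^'n) \<beta> (t^2) = XB_shell a \<beta> T"
proof -
  have tnz: "t \<noteq> 0" and vt: "v t = int T" using t by (auto simp: shell_def)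
  define w where "w = t / \<pi>^T"
  have wnz: "w \<noteq> 0" and vw: "v w = 0"
    using tnz vt uniformizer_nonzero by (simp_all add: w_def val_divide val_uniformizer_power)
  have t2: "t^2 = w^2 * \<pi>^(2*T)"
    using uniformizer_nonzero by (simp add: w_def power_mult_distrib power_mult field_simps)
  show ?thesis
  proof (cases "T < ram_index")
    case True
    then show ?thesis unfolding XB_shell_def t2 using XB_unit_square[OF vw wnz] by simp
  next
    case False
    define u0 where "u0 = \<pi>^ram_index / 2"
    have u0nz: "u0 \<noteq> 0" using uniformizer_nonzero two_nonzero by (simp add: u0_def)
    have vu0: "v u0 = 0"
      using uniformizer_nonzero two_nonzero
      by (simp add: u0_def val_divide val_uniformizer_power int_ram_index)
    have "\<pi>^(2*T) = u0^2 * four_pi (T - ram_index)"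
    proof -
      have "2 * T = 2 * ram_index + 2 * (T - ram_index)" using False by simp
      then have "\<pi>^(2*T) = (\<pi>^ram_index)^2 * \<pi>^(2*(T - ram_index))"
        by (simp add: power_add power_mult[symmetric] mult.commute)
      then show ?thesis using two_nonzero four_nonzero by (simp add: u0_def four_pi_def power_divide field_simps)
    qed
    then have "t^2 = (w * u0)^2 * four_pi (T - ram_index)"
      using t2 by (simp add: power_mult_distrib)
    moreover have "v (w * u0) = 0" "w * u0 \<noteq> 0" using vw vu0 wnz u0nz by (simp_all add: val_mult)
    ultimately show ?thesis unfolding XB_shell_def using False XB_unit_square by simp
  qed
qed

lemma PiB_integrand_shell:
  assumes t: "t \<in> shell T"
  shows "PiB_integrand v \<pi> q M (a::'a^'n) \<alpha> \<beta> t = PiB_term a \<alpha> \<beta> T"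
proof -
  have "t \<noteq> 0" "v t = int T" using t by (auto simp: shell_def)
  then show ?thesis unfolding PiB_integrand_def PiB_term_def using absv_powr XB_square_of_shell[OF t] by simp
qed

lemma norm_PiB_term_le:
  "0 < Re \<beta> \<Longrightarrow> norm (PiB_term (a::'a^'n) \<alpha> \<beta> T) \<le> norm (qpowr \<alpha>) ^ T * (1 / (1 - norm (qpowr \<beta>)))"
proof -
  assume b: "0 < Re \<beta>"
  have "norm (XB_shell a \<beta> T) \<le> 1 / (1 - norm (qpowr \<beta>))"
    unfolding XB_shell_def using norm_XB_le[OF b] by simp
  then show ?thesis unfolding PiB_term_def norm_mult norm_power by (rule mult_left_mono) simp
qed

lemma summable_norm_PiB_term: "0 < Re \<alpha> \<Longrightarrow> 0 < Re \<beta> \<Longrightarrow> summable (\<lambda>T. norm (PiB_term (a::'a^'n) \<alpha> \<beta> T))"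
proof -
  assume a: "0 < Re \<alpha>" and b: "0 < Re \<beta>"
  have "summable (\<lambda>T. norm (qpowr \<alpha>) ^ T * (1 / (1 - norm (qpowr \<beta>))))"
    using norm_qpowr_less_1[OF a] by (intro summable_mult2 summable_geometric) simp
  then show ?thesis by (rule summable_comparison_test') (use norm_PiB_term_le[OF b] in simp)
qed

lemma PiB_integrand_eq_suminf_shells:
  "indicator (valring v - {0}) t *\<^sub>R PiB_integrand v \<pi> q M a \<alpha> \<beta> t
    = (\<Sum>T. indicator (shell T) t *\<^sub>R PiB_term a \<alpha> \<beta> T)"
proof (cases "t \<in> valring v - {0}")
  case True
  let ?T = "nat (v t)"
  have t: "t \<in> shell ?T" using True valring_iff_shell by blast
  then have "indicator (shell T) t *\<^sub>R PiB_term a \<alpha> \<beta> T = (if T = ?T then PiB_term a \<alpha> \<beta> T else 0)" for T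
    using shell_disjoint[of T ?T] by (auto simp: indicator_def)
  then have "(\<lambda>T. indicator (shell T) t *\<^sub>R PiB_term a \<alpha> \<beta> T) sums PiB_term a \<alpha> \<beta> ?T"
    using sums_single[of ?T "PiB_term a \<alpha> \<beta>"] by simp
  then show ?thesis using True PiB_integrand_shell[OF t] by (simp add: sums_iff)
next
  case False
  then have "indicator (shell T) t = (0::real)" for T
    using shell_subset_valring by (auto simp: indicator_def)
  then show ?thesis using False by simp
qed

lemma PiB_sums:
  fixes a :: "'a ^ 'n"
  assumes a: "0 < Re \<alpha>" and b: "0 < Re \<beta>"
  shows "set_integrable N (valring v - {0}) (PiB_integrand v \<pi> q M a \<alpha> \<beta>)"
    and "(\<lambda>T. PiB_term a \<alpha> \<beta> T) sums PiB v \<pi> q M N a \<alpha> \<beta>"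
proof -
  define g where "g T t = indicator (shell T) t *\<^sub>R PiB_term a \<alpha> \<beta> T" for T t
  have fin: "emeasure N (shell T) < \<infinity>" for T using emeasure_shell by simp
  have int: "integrable N (g T)" for T
    unfolding g_def using shell_sets fin by (rule integrable_indicator)
  have intg: "integral\<^sup>L N (g T) = PiB_term a \<alpha> \<beta> T" for T
    unfolding g_def using shell_sets fin measure_shell by simp
  have intn: "(\<integral>t. norm (g T t) \<partial>N) = norm (PiB_term a \<alpha> \<beta> T)" for T
  proof -
    have "(\<lambda>t. norm (g T t)) = (\<lambda>t. indicator (shell T) t *\<^sub>R norm (PiB_term a \<alpha> \<beta> T))"
      unfolding g_def by (auto simp: indicator_def)
    then show ?thesis using shell_sets fin measure_shell by simp
  qed
  have sn: "summable (\<lambda>T. norm (PiB_term a \<alpha> \<beta> T))" by (rule summable_norm_PiB_term[OF a b])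
  have "norm (g T t) \<le> norm (PiB_term a \<alpha> \<beta> T)" for T t
    unfolding g_def by (simp add: indicator_def)
  then have ae: "AE t in N. summable (\<lambda>T. norm (g T t))"
    by (intro AE_I2 summable_comparison_test'[OF sn]) simp
  have sint: "summable (\<lambda>T. (\<integral>t. norm (g T t) \<partial>N))" unfolding intn by (rule sn)
  have eq: "(\<lambda>t. indicator (valring v - {0}) t *\<^sub>R PiB_integrand v \<pi> q M a \<alpha> \<beta> t) = (\<lambda>t. \<Sum>T. g T t)"
    unfolding g_def by (rule ext) (rule PiB_integrand_eq_suminf_shells)
  show "set_integrable N (valring v - {0}) (PiB_integrand v \<pi> q M a \<alpha> \<beta>)"
    unfolding set_integrable_def eq by (rule integrable_suminf[OF int ae sint])
  show "(\<lambda>T. PiB_term a \<alpha> \<beta> T) sums PiB v \<pi> q M N a \<alpha> \<beta>"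
    unfolding PiB_def set_lebesgue_integral_def eq using sums_integral[OF int ae sint] intg by simp
qed

end

locale PiB_setting = anisotropic_form v \<pi> q a + PiB_measures v \<pi> q M N
  for v :: "'a::field \<Rightarrow> int" and \<pi> q and a :: "'a ^ 'n" and M :: "('a ^ 'n) measure" and N
begin

lemma XBl_four_pi_rec:
  shows "XBl v \<pi> M a (l + 2) (four_pi (Suc m)) - XBl v \<pi> M a (l + 2) 0
       = (XBl v \<pi> M a l (four_pi m) - XBl v \<pi> M a l 0) / real q ^ CARD('n)"
proof (cases "int l \<le> v 2 + 2 * int m")
  case True
  have "int (l + 2) \<le> v 2 + 2 * int (Suc m)" using True by simp
  then show ?thesis using XBl_four_pi_low[OF True] XBl_four_pi_low[of "l+2" "Suc m"] by simp
next
  case False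
  then have l: "v 2 \<le> int l" by simp
  have d1: "val_ge (2 * v 2 + 2) (four_pi (Suc m))"
    using val_ge_four_pi[of "Suc m"] by (rule val_ge_mono) simp
  have "XBl v \<pi> M a (l + 2) (four_pi (Suc m)) = XBl v \<pi> M a l (four_pi m) / real q ^ CARD('n)"
    unfolding four_pi_Suc using XBl_uniformizer_shift XBl_set_subset_maxideal_vecs[OF l] d1 four_pi_Suc by metis
  moreover have "XBl v \<pi> M a (l + 2) 0 = XBl v \<pi> M a l 0 / real q ^ CARD('n)"
    using XBl_uniformizer_shift[of a l 0] XBl_set_subset_maxideal_vecs[OF l, of 0] by simp
  ultimately show ?thesis by (simp add: diff_divide_distrib)
qed

lemma XB_four_pi_rec:
  assumes b: "0 < Re \<beta>"
  shows "XB v \<pi> q M a \<beta> (four_pi (Suc m)) - XB v \<pi> q M a \<beta> 0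
     = ((qpowr \<beta>)^2 / of_nat q ^ CARD('n)) * (XB v \<pi> q M a \<beta> (four_pi m) - XB v \<pi> q M a \<beta> 0)"
proof -
  let ?z = "qpowr \<beta>"
  define d where "d l k = complex_of_real (XBl v \<pi> M a l (four_pi k)) - complex_of_real (XBl v \<pi> M a l 0)" for l k
  have D: "XB v \<pi> q M a \<beta> (four_pi k) - XB v \<pi> q M a \<beta> 0 = (\<Sum>l. ?z^l * d l k)" for k
    unfolding XB_def d_def using XB_summable[OF b, of a "four_pi k"] XB_summable[OF b, of a 0]
    by (subst suminf_diff) (simp_all add: algebra_simps)
  have sk: "summable (\<lambda>l. ?z^l * d l k)" for k
    unfolding d_def using summable_diff[OF XB_summable[OF b, of a "four_pi k"] XB_summable[OF b, of a 0]]
    by (simp add: algebra_simps)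
  have low: "(\<Sum>l<2. ?z^l * d l (Suc m)) = 0"
    by (simp add: d_def XBl_four_pi_Suc_low numeral_2_eq_2)
  have shift: "?z^(l + 2) * d (l + 2) (Suc m) = (?z^2 / of_nat q ^ CARD('n)) * (?z^l * d l m)" for l
  proof -
    have "d (l + 2) (Suc m) = d l m / of_nat q ^ CARD('n)"
      unfolding d_def using arg_cong[OF XBl_four_pi_rec[of l m], of complex_of_real]
      by (simp add: diff_divide_distrib)
    then show ?thesis by (simp add: power_add power2_eq_square field_simps)
  qed
  have "(\<Sum>l. ?z^l * d l (Suc m)) = (\<Sum>l. ?z^(l + 2) * d (l + 2) (Suc m)) + (\<Sum>l<2. ?z^l * d l (Suc m))"
    by (rule suminf_split_initial_segment[OF sk])
  also have "\<dots> = (\<Sum>l. (?z^2 / of_nat q ^ CARD('n)) * (?z^l * d l m))" using low shift by simp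
  also have "\<dots> = (?z^2 / of_nat q ^ CARD('n)) * (\<Sum>l. ?z^l * d l m)" by (rule suminf_mult[OF sk])
  finally show ?thesis using D by simp
qed

lemma XB_four_pi:
  assumes b: "0 < Re \<beta>"
  shows "XB v \<pi> q M a \<beta> (four_pi m) = XB v \<pi> q M a \<beta> 0
     + ((qpowr \<beta>)^2 / of_nat q ^ CARD('n))^m * (XB v \<pi> q M a \<beta> 4 - XB v \<pi> q M a \<beta> 0)"
proof (induction m)
  case 0 then show ?case by (simp add: four_pi_def)
next
  case (Suc m)
  define w where "w = (qpowr \<beta>)^2 / of_nat q ^ CARD('n)"
  have "XB v \<pi> q M a \<beta> (four_pi (Suc m)) = XB v \<pi> q M a \<beta> 0 + w * (XB v \<pi> q M a \<beta> (four_pi m) - XB v \<pi> q M a \<beta> 0)"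
    using XB_four_pi_rec[OF b, of m] unfolding w_def[symmetric] by (simp add: algebra_simps)
  also have "\<dots> = XB v \<pi> q M a \<beta> 0 + w ^ Suc m * (XB v \<pi> q M a \<beta> 4 - XB v \<pi> q M a \<beta> 0)"
    using Suc unfolding w_def[symmetric] by simp
  finally show ?case unfolding w_def .
qed

lemma PiB_term_beyond_ram_index:
  assumes "0 < Re \<beta>"
  shows "PiB_term a \<alpha> \<beta> (m + ram_index) = qpowr \<alpha> ^ ram_index *
    (XB v \<pi> q M a \<beta> 0 * qpowr \<alpha> ^ m
     + (XB v \<pi> q M a \<beta> 4 - XB v \<pi> q M a \<beta> 0) * (qpowr \<alpha> * (qpowr \<beta> ^ 2 / of_nat q ^ CARD('n))) ^ m)"
proof -
  have "A ^ (m + r) * (X0 + W ^ m * (X4 - X0)) = A ^ r * (X0 * A ^ m + (X4 - X0) * (A * W) ^ m)"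
    for A W X0 X4 :: complex and r
    by (simp add: power_add power_mult_distrib algebra_simps)
  then show ?thesis
    unfolding PiB_term_def XB_shell_def XB_four_pi[OF assms] by simp
qed

lemma PiB_closed_form:
  assumes a: "0 < Re \<alpha>" and b: "0 < Re \<beta>"
  shows "PiB v \<pi> q M N a \<alpha> \<beta> =
      (\<Sum>T<nat (v 2). (of_nat q powr (- \<alpha>)) ^ T * XB v \<pi> q M a \<beta> (\<pi> ^ (2 * T)))
      + complex_of_real (absv v q 2) powr \<alpha>
          / (1 - of_nat q powr (- \<alpha>) * of_nat q powr (- 2 * \<beta> - of_nat CARD('n)))
          * XB v \<pi> q M a \<beta> 4
      + complex_of_real (absv v q 2) powr \<alpha>
          * (of_nat q powr (- \<alpha>) - of_nat q powr (- \<alpha>) * of_nat q powr (- 2 * \<beta> - of_nat CARD('n)))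
          / ((1 - of_nat q powr (- \<alpha>)) * (1 - of_nat q powr (- \<alpha>) * of_nat q powr (- 2 * \<beta> - of_nat CARD('n))))
          * XB v \<pi> q M a \<beta> 0"
proof -
  let ?A = "qpowr \<alpha>" and ?W = "qpowr \<beta> ^ 2 / of_nat q ^ CARD('n)"
  let ?X0 = "XB v \<pi> q M a \<beta> 0" and ?X4 = "XB v \<pi> q M a \<beta> 4"
  have "(\<lambda>m. PiB_term a \<alpha> \<beta> (m + ram_index))
      sums (PiB v \<pi> q M N a \<alpha> \<beta> - (\<Sum>T<ram_index. PiB_term a \<alpha> \<beta> T))"
    using sums_split_initial_segment[OF PiB_sums(2)[OF a b]] .
  moreover have "(\<lambda>m. PiB_term a \<alpha> \<beta> (m + ram_index))
      sums (?A ^ ram_index / (1 - ?A * ?W) * ?X4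
            + ?A ^ ram_index * (?A - ?A * ?W) / ((1 - ?A) * (1 - ?A * ?W)) * ?X0)"
    unfolding PiB_term_beyond_ram_index[OF b]
    using norm_qpowr_less_1[OF a] norm_qpowr_mult_less_1[OF a b] by (rule sums_geometric_combination)
  moreover have "(\<Sum>T<ram_index. PiB_term a \<alpha> \<beta> T) = (\<Sum>T<nat (v 2). ?A ^ T * XB v \<pi> q M a \<beta> (\<pi> ^ (2 * T)))"
    unfolding PiB_term_def XB_shell_def ram_index_def by (intro sum.cong) auto
  moreover have "complex_of_real (absv v q 2) powr \<alpha> = ?A ^ ram_index"
    using absv_powr[of 2 ram_index \<alpha>] two_nonzero int_ram_index by simp
  moreover have "(of_nat q :: complex) powr (- 2 * \<beta> - of_nat CARD('n)) = ?W"
    using card_residue_field_ge_2 by (intro of_nat_powr_minus_2_mult_diff) simp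
  ultimately show ?thesis
    by (simp add: sums_iff algebra_simps)
qed

end

theorem proposition2p3:
  fixes v :: "'a::field \<Rightarrow> int" and \<pi> :: 'a and q :: nat
    and a :: "'a ^ 'n" and M :: "('a ^ 'n) measure" and N :: "'a measure"
  assumes field: "nonarch_local_field_res2 v \<pi> q"
    and aniso: "\<forall>x. diagQ a x = 0 \<longrightarrow> x = 0"
    and ord_a: "\<forall>i. 0 \<le> v (a $ i) \<and> v (a $ i) \<le> 1"
    and haarM: "is_additive_haar_prob v \<pi> M"
    and haarN: "is_mult_haar v \<pi> N"
  shows "\<exists>R::real. \<forall>\<alpha> \<beta> :: complex. R < Re \<alpha> \<and> R < Re \<beta> \<longrightarrow>
    (\<forall>\<rho>\<in>valring v. summable (\<lambda>l. (of_nat q powr (- \<beta>)) ^ l * complex_of_real (XBl v \<pi> M a l \<rho>))) \<and>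
    set_integrable N (valring v - {0}) (PiB_integrand v \<pi> q M a \<alpha> \<beta>) \<and>
    PiB v \<pi> q M N a \<alpha> \<beta> =
      (\<Sum>T<nat (v 2). (of_nat q powr (- \<alpha>)) ^ T * XB v \<pi> q M a \<beta> (\<pi> ^ (2 * T)))
      + complex_of_real (absv v q 2) powr \<alpha>
          / (1 - of_nat q powr (- \<alpha>) * of_nat q powr (- 2 * \<beta> - of_nat CARD('n)))
          * XB v \<pi> q M a \<beta> 4
      + complex_of_real (absv v q 2) powr \<alpha>
          * (of_nat q powr (- \<alpha>) - of_nat q powr (- \<alpha>) * of_nat q powr (- 2 * \<beta> - of_nat CARD('n)))
          / ((1 - of_nat q powr (- \<alpha>)) * (1 - of_nat q powr (- \<alpha>) * of_nat q powr (- 2 * \<beta> - of_nat CARD('n))))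
          * XB v \<pi> q M a \<beta> 0"
proof -
  interpret PiB_setting v \<pi> q a M N
    by unfold_locales (fact field aniso ord_a haarM haarN)+
  show ?thesis
    apply (rule exI[of _ 0], intro allI impI, elim conjE, intro conjI ballI)
      apply (erule XB_summable)
     apply (erule (1) PiB_sums(1))
    apply (erule (1) PiB_closed_form)
    done
qed

end
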